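(* Let $L>0$, $m>0$, let $a,b:[-L,L]\to\mathbb{R}$ be positive even $C^1([-L,L])$ functions, and let $G\in C^{1,1}_{\rm loc}(\mathbb{R})$ be nonnegative and even; set $f:=-G'$. Suppose $$(ab)'\ge0\ \text{in }(0,L),\qquad G\ge G(m)\ \text{in }(0,\infty),\qquad G'\le 0\ \text{in }(0,m).$$ Then the problem $-(au')'=bf(u)$ in $(-L,L)$, $u(L)=-u(-L)=m$, admits a unique solution, which is therefore odd. Furthermore, this solution is increasing.
   Context: A solution is a function $u\in H^1((-L,L))$ satisfying the equation weakly (hence classically) and the boundary conditions. *)

theory Defs
  imports "HOL-Analysis.Analysis"
begin

text \<open>In one dimension an H^1 weak solution is continuous on [-L,L] and (since a is C^1 and
  f(u) is continuous) classical; conversely a classical solution continuous on [-L,L]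
  has a u' Lipschitz, hence lies in H^1. We use the classical formulation.\<close>

definition is_solution ::
  "real \<Rightarrow> (real \<Rightarrow> real) \<Rightarrow> (real \<Rightarrow> real) \<Rightarrow> (real \<Rightarrow> real) \<Rightarrow> real \<Rightarrow> (real \<Rightarrow> real) \<Rightarrow> bool"
  where
  "is_solution L a b f m u \<longleftrightarrow>
     continuous_on {-L..L} u \<and>
     (\<exists>du. \<forall>x\<in>{-L<..<L}.
        (u has_real_derivative du x) (at x) \<and>
        ((\<lambda>y. a y * du y) has_real_derivative (- (b x * f (u x)))) (at x)) \<and>
     u L = m \<and> u (-L) = - m"

definition C1_on_with_deriv :: "real set \<Rightarrow> (real \<Rightarrow> real) \<Rightarrow> (real \<Rightarrow> real) \<Rightarrow> bool" where
  "C1_on_with_deriv S h d \<longleftrightarrow>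
     continuous_on S d \<and> (\<forall>x\<in>S. (h has_real_derivative d x) (at x within S))"

end

theory Submission
  imports Defs
begin

text \<open>
  With the flux \<open>w = a u'\<close> the equation becomes the system \<open>u' = w / a\<close>, \<open>w' = b g(u)\<close>.

  Existence: freeze \<open>g\<close> outside \<open>[-m, m]\<close> (where \<open>g (\<plusminus>m) = 0\<close>), which makes it globally
  Lipschitz and bounded. Shooting from \<open>u(-L) = -m\<close> with \<open>w(-L) = s\<close>, Banach's fixed point
  theorem in a weighted sup norm gives a solution depending continuously on \<open>s\<close> whose value at
  \<open>L\<close> sweeps out all of \<open>\<real>\<close>, so some \<open>s\<close> hits \<open>u(L) = m\<close>. At an interior extremum
  outside \<open>[-m, m]\<close> the solution would be at rest, hence constant by uniqueness for the initial
  value problem, which the boundary values forbid.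

  Monotonicity: since \<open>(ab)' \<ge> 0\<close> on \<open>(0, L)\<close> and \<open>G \<ge> G(m)\<close>, the energy
  \<open>w\<^sup>2/2 - ab (G(u) - G(m))\<close> decreases towards \<open>L\<close>, where it tends to \<open>0\<close>; so it is
  nonnegative, and a zero of \<open>w\<close> would again be a rest point.

  Uniqueness and oddness: parametrizing solutions by their values \<open>s\<close>, the differences of
  \<open>\<integral>dx/a\<close> and of \<open>w\<^sup>2/2\<close> between two solutions form a cooperative pair on \<open>[0, m)\<close>
  (using \<open>g \<le> 0\<close> on \<open>(0, m)\<close>), which excludes any ordering of their data at one level. Comparing a
  solution with its reflection \<open>-u(-x)\<close> gives \<open>u(0) = 0\<close>, comparing two solutions at \<open>s = 0\<close>
  gives equal \<open>w(0)\<close>; uniqueness for the initial value problem concludes.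
\<close>

lemma has_real_derivative_odd_if_even:
  fixes f f' :: "real \<Rightarrow> real"
  assumes even: "\<And>x. f (-x) = f x" and deriv: "\<And>x. (f has_real_derivative f' x) (at x)"
  shows "f' (-x) = - f' x"
proof -
  have "((\<lambda>y. f (-y)) has_real_derivative f' (-x) * (-1)) (at x)"
    by (rule DERIV_chain2[OF deriv]) (auto intro!: derivative_eq_intros)
  then have "(f has_real_derivative - f' (-x)) (at x)"
    by (simp add: even)
  then show ?thesis
    using DERIV_unique[OF _ deriv] by fastforce
qed

lemma gronwall_vanishing_forward:
  fixes y y' :: "real \<Rightarrow> real"
  assumes "p \<le> q"
    and deriv: "\<And>t. t \<in> {p..q} \<Longrightarrow> (y has_real_derivative y' t) (at t)"
    and bound: "\<And>t. t \<in> {p..q} \<Longrightarrow> y' t \<le> K * y t"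
    and nonneg: "y q \<ge> 0" and start: "y p = 0"
  shows "y q = 0"
proof -
  have "y q * exp (- K * q) \<le> y p * exp (- K * p)"
  proof (rule DERIV_nonpos_imp_nonincreasing[OF \<open>p \<le> q\<close>])
    fix t assume t: "p \<le> t" "t \<le> q"
    have "((\<lambda>t. y t * exp (- K * t)) has_real_derivative (y' t - K * y t) * exp (- K * t)) (at t)"
      using deriv[of t] t by (auto intro!: derivative_eq_intros simp: algebra_simps)
    moreover have "(y' t - K * y t) * exp (- K * t) \<le> 0"
      using bound[of t] t by (simp add: mult_nonpos_nonneg)
    ultimately show "\<exists>z. ((\<lambda>t. y t * exp (- K * t)) has_real_derivative z) (at t) \<and> z \<le> 0"
      by blast
  qed
  then show ?thesis
    using nonneg start by (simp add: mult_le_0_iff)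
qed

lemma gronwall_vanishing:
  fixes y y' :: "real \<Rightarrow> real"
  assumes deriv: "\<And>t. t \<in> {\<alpha><..<\<beta>} \<Longrightarrow> (y has_real_derivative y' t) (at t)"
    and bound: "\<And>t. t \<in> {\<alpha><..<\<beta>} \<Longrightarrow> \<bar>y' t\<bar> \<le> K * y t"
    and nonneg: "\<And>t. t \<in> {\<alpha><..<\<beta>} \<Longrightarrow> y t \<ge> 0"
    and x0: "x0 \<in> {\<alpha><..<\<beta>}" and start: "y x0 = 0"
    and x: "x \<in> {\<alpha><..<\<beta>}"
  shows "y x = 0"
proof (cases "x0 \<le> x")
  case True
  show ?thesis
  proof (rule gronwall_vanishing_forward[OF True])
    fix t assume "t \<in> {x0..x}"
    then have "t \<in> {\<alpha><..<\<beta>}" using x0 x by auto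
    then show "(y has_real_derivative y' t) (at t)" "y' t \<le> K * y t"
      using deriv bound abs_le_D1 order_trans by blast+
  qed (use nonneg x start in auto)
next
  case False
  define z where "z t = y (-t)" for t
  have "z (-x) = 0"
  proof (rule gronwall_vanishing_forward[where y = z and p = "-x0" and q = "-x"
        and y' = "\<lambda>t. - y' (-t)"])
    fix t assume "t \<in> {-x0..-x}"
    then have t: "-t \<in> {\<alpha><..<\<beta>}" using x0 x by auto
    have "(z has_real_derivative y' (-t) * (-1)) (at t)"
      unfolding z_def[abs_def]
      by (rule DERIV_chain2[where g = uminus, OF deriv[OF t]]) (auto intro!: derivative_eq_intros)
    then show "(z has_real_derivative - y' (-t)) (at t)"
      by simp
    show "- y' (-t) \<le> K * z t"
      using bound[OF t] unfolding z_def by linarith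
  qed (use False nonneg x start in \<open>auto simp: z_def\<close>)
  then show ?thesis by (simp add: z_def)
qed

lemma continuous_on_Icc_eq_if_eq_on_interior:
  fixes f :: "real \<Rightarrow> 'a::t1_space"
  assumes "\<alpha> < \<beta>" "continuous_on {\<alpha>..\<beta>} f" "\<And>x. x \<in> {\<alpha><..<\<beta>} \<Longrightarrow> f x = k"
    and "x \<in> {\<alpha>..\<beta>}"
  shows "f x = k"
proof -
  have "closed {x \<in> {\<alpha>..\<beta>}. f x = k}"
    using continuous_closed_preimage_constant[OF assms(2)] by simp
  moreover have "{\<alpha><..<\<beta>} \<subseteq> {x \<in> {\<alpha>..\<beta>}. f x = k}"
    using assms(3) by auto
  ultimately have "closure {\<alpha><..<\<beta>} \<subseteq> {x \<in> {\<alpha>..\<beta>}. f x = k}"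
    by (rule closure_minimal[rotated])
  then show ?thesis
    using assms(1,4) by auto
qed

lemma continuous_nonvanishing_pos:
  fixes f :: "real \<Rightarrow> real"
  assumes "continuous_on {\<alpha><..<\<beta>} f" "\<And>x. x \<in> {\<alpha><..<\<beta>} \<Longrightarrow> f x \<noteq> 0"
    and "z \<in> {\<alpha><..<\<beta>}" "f z > 0" and x: "x \<in> {\<alpha><..<\<beta>}"
  shows "f x > 0"
proof (rule ccontr)
  assume "\<not> f x > 0"
  then have "f x < 0" using assms(2)[OF x] by simp
  have cont: "continuous_on {min x z..max x z} f"
    using x \<open>z \<in> _\<close> by (intro continuous_on_subset[OF assms(1)]) auto
  obtain t where "min x z \<le> t" "t \<le> max x z" "f t = 0"
  proof (cases "x \<le> z")
    case True
    then show ?thesis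
      using IVT'[of f x 0 z] cont \<open>f x < 0\<close> \<open>f z > 0\<close> that by (auto simp: min_def max_def)
  next
    case False
    then show ?thesis
      using IVT2'[of f x 0 z] cont \<open>f x < 0\<close> \<open>f z > 0\<close> that by (auto simp: min_def max_def)
  qed
  moreover have "t \<in> {\<alpha><..<\<beta>}"
    using calculation x \<open>z \<in> _\<close> by auto
  ultimately show False
    using assms(2) by blast
qed

lemma continuous_on_Icc_abs_bound:
  fixes u :: "real \<Rightarrow> real"
  assumes "continuous_on {\<alpha>..\<beta>} u"
  obtains R where "\<And>t. t \<in> {\<alpha>..\<beta>} \<Longrightarrow> \<bar>u t\<bar> \<le> R"
proof -
  have "bounded (u ` {\<alpha>..\<beta>})"
    using assms by (intro compact_imp_bounded compact_continuous_image) auto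
  then obtain R where "\<forall>t\<in>{\<alpha>..\<beta>}. \<bar>u t\<bar> \<le> R"
    unfolding bounded_iff by auto
  then show ?thesis
    using that by blast
qed

lemma cross_term_bound:
  fixes p q r \<alpha> \<beta> C :: real
  assumes "\<alpha> > 0" "\<beta> > 0" "C \<ge> 0" and r: "\<bar>r\<bar> \<le> C * \<bar>p\<bar>"
  shows "\<bar>2 * p * (q / \<alpha>) + 2 * q * (\<beta> * r)\<bar> \<le> (1 / \<alpha> + C * \<beta>) * (p\<^sup>2 + q\<^sup>2)"
proof -
  have "(2 * \<beta> * \<bar>q\<bar>) * \<bar>r\<bar> \<le> (2 * \<beta> * \<bar>q\<bar>) * (C * \<bar>p\<bar>)"
    using r \<open>\<beta> > 0\<close> by (intro mult_left_mono) auto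
  moreover have "\<bar>2 * q * (\<beta> * r)\<bar> = (2 * \<beta> * \<bar>q\<bar>) * \<bar>r\<bar>"
    using \<open>\<beta> > 0\<close> unfolding abs_mult by simp
  ultimately have second: "\<bar>2 * q * (\<beta> * r)\<bar> \<le> (C * \<beta>) * (2 * \<bar>p\<bar> * \<bar>q\<bar>)"
    by (simp only: ac_simps)
  have first: "\<bar>2 * p * (q / \<alpha>)\<bar> = (1 / \<alpha>) * (2 * \<bar>p\<bar> * \<bar>q\<bar>)"
    using \<open>\<alpha> > 0\<close> unfolding abs_mult abs_divide by simp
  have "\<bar>2 * p * (q / \<alpha>) + 2 * q * (\<beta> * r)\<bar> \<le> \<bar>2 * p * (q / \<alpha>)\<bar> + \<bar>2 * q * (\<beta> * r)\<bar>"
    by (rule abs_triangle_ineq)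
  also have "\<dots> \<le> (1 / \<alpha> + C * \<beta>) * (2 * \<bar>p\<bar> * \<bar>q\<bar>)"
    unfolding distrib_right using first second by linarith
  also have "\<dots> \<le> (1 / \<alpha> + C * \<beta>) * (p\<^sup>2 + q\<^sup>2)"
    using sum_squares_bound[of "\<bar>p\<bar>" "\<bar>q\<bar>"] assms(1-3) by (intro mult_left_mono) auto
  finally show ?thesis .
qed

lemma first_nonpositive_point:
  fixes D :: "real \<Rightarrow> real"
  assumes "continuous_on {p..q} D" "p \<le> q" "D q \<le> 0"
  obtains r where "p \<le> r" "r \<le> q" "D r \<le> 0" "\<And>s. p \<le> s \<Longrightarrow> s < r \<Longrightarrow> D s > 0"
proof -
  define Z where "Z = {p..q} \<inter> D -` {..0}"
  have "closed Z"
    unfolding Z_def by (rule continuous_closed_preimage[OF assms(1)]) auto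
  moreover have "q \<in> Z" "bdd_below Z"
    using assms(2,3) unfolding Z_def by (auto intro: bdd_belowI[of _ p])
  ultimately have "Inf Z \<in> Z"
    using closed_contains_Inf by blast
  moreover have "D s > 0" if "p \<le> s" "s < Inf Z" for s
  proof (rule ccontr)
    assume "\<not> D s > 0"
    then have "s \<in> Z"
      using that \<open>Inf Z \<in> Z\<close> unfolding Z_def by auto
    then have "Inf Z \<le> s"
      using \<open>bdd_below Z\<close> by (rule cInf_lower)
    then show False using that by simp
  qed
  moreover have "p \<le> Inf Z" "Inf Z \<le> q" "D (Inf Z) \<le> 0"
    using \<open>Inf Z \<in> Z\<close> unfolding Z_def by auto
  ultimately show ?thesis
    by (intro that[of "Inf Z"])
qed

lemma isCont_pos_right_neighbourhood:
  fixes P :: "real \<Rightarrow> real"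
  assumes "isCont P p" "P p > 0"
  obtains b where "b > p" "\<And>s. p \<le> s \<Longrightarrow> s < b \<Longrightarrow> P s > 0"
proof -
  have "eventually (\<lambda>s. P s > 0) (at p)"
    using assms order_tendstoD(1) unfolding isCont_def by blast
  then have "eventually (\<lambda>s. P s > 0) (at_right p)"
    by (rule eventually_at_split[THEN iffD1, THEN conjunct2])
  then obtain b where "b > p" "\<And>s. p < s \<Longrightarrow> s < b \<Longrightarrow> P s > 0"
    unfolding eventually_at_right_field by blast
  then show ?thesis
    using assms(2) by (intro that[of b]) (auto simp: order_le_less)
qed

lemma cooperative_pair_stays_positive:
  fixes D P D' P' :: "real \<Rightarrow> real"
  assumes "p \<le> q"
    and dD: "\<And>s. s \<in> {p..<q} \<Longrightarrow> (D has_real_derivative D' s) (at s)"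
    and dP: "\<And>s. s \<in> {p..<q} \<Longrightarrow> (P has_real_derivative P' s) (at s)"
    and cD: "continuous_on {p..q} D"
    and P_incr: "\<And>s. s \<in> {p..<q} \<Longrightarrow> D s > 0 \<Longrightarrow> P' s \<ge> 0"
    and D_incr: "\<And>s. s \<in> {p..<q} \<Longrightarrow> P s \<ge> 0 \<Longrightarrow> D' s \<ge> 0"
    and D_start: "D p > 0" and P_start: "P p \<ge> 0"
  shows "D q > 0"
proof (rule ccontr)
  assume "\<not> D q > 0"
  then have "D q \<le> 0" by simp
  then obtain r where r: "p \<le> r" "r \<le> q" "D r \<le> 0" and D_pos: "\<And>s. p \<le> s \<Longrightarrow> s < r \<Longrightarrow> D s > 0"
    by (rule first_nonpositive_point[OF cD \<open>p \<le> q\<close>]) blast+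
  have P_nonneg: "P s \<ge> 0" if "p \<le> s" "s < r" for s
  proof -
    have "P p \<le> P s"
    proof (rule DERIV_nonneg_imp_increasing_open[OF \<open>p \<le> s\<close>])
      fix t assume "p < t" "t < s"
      then have "t \<in> {p..<q}" "D t > 0" using D_pos that r by auto
      then show "\<exists>z. (P has_real_derivative z) (at t) \<and> 0 \<le> z"
        using dP P_incr by blast
    next
      show "continuous_on {p..s} P"
      proof (intro continuous_at_imp_continuous_on ballI)
        fix t assume "t \<in> {p..s}"
        then have "t \<in> {p..<q}" using that r by auto
        then show "isCont P t" by (rule DERIV_isCont[OF dP])
      qed
    qed
    then show ?thesis using P_start by simp
  qed
  have "D p \<le> D r"
  proof (rule DERIV_nonneg_imp_increasing_open[OF \<open>p \<le> r\<close>])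
    fix t assume "p < t" "t < r"
    then have "t \<in> {p..<q}" "P t \<ge> 0" using P_nonneg r by auto
    then show "\<exists>z. (D has_real_derivative z) (at t) \<and> 0 \<le> z"
      using dD D_incr by blast
  next
    show "continuous_on {p..r} D"
      using r by (intro continuous_on_subset[OF cD]) auto
  qed
  then show False
    using D_start r by simp
qed

lemma cooperative_pair_positive:
  fixes D P D' P' :: "real \<Rightarrow> real"
  assumes "p < q"
    and dD: "\<And>s. s \<in> {p..<q} \<Longrightarrow> (D has_real_derivative D' s) (at s)"
    and dP: "\<And>s. s \<in> {p..<q} \<Longrightarrow> (P has_real_derivative P' s) (at s)"
    and cD: "continuous_on {p..q} D"
    and P_incr: "\<And>s. s \<in> {p..<q} \<Longrightarrow> D s > 0 \<Longrightarrow> P' s \<ge> 0"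
    and D_incr: "\<And>s. s \<in> {p..<q} \<Longrightarrow> P s \<ge> 0 \<Longrightarrow> D' s \<ge> 0"
    and D_strict: "\<And>s. s \<in> {p..<q} \<Longrightarrow> P s > 0 \<Longrightarrow> D' s > 0"
    and start: "D p \<ge> 0" "P p \<ge> 0" "D p > 0 \<or> P p > 0"
  shows "D q > 0"
proof -
  obtain r where r: "p \<le> r" "r < q" "D r > 0" "P r \<ge> 0"
  proof (cases "D p > 0")
    case True
    then show ?thesis using that[of p] \<open>p < q\<close> start by auto
  next
    case False
    then have "isCont P p" "P p > 0"
      using start dP[of p] \<open>p < q\<close> DERIV_isCont by auto
    then obtain b where "b > p" and b: "\<And>s. p \<le> s \<Longrightarrow> s < b \<Longrightarrow> P s > 0"
      by (rule isCont_pos_right_neighbourhood) blast+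
    define r where "r = min ((p + b) / 2) ((p + q) / 2)"
    have "p < r" "r < q" "r < b"
      using \<open>b > p\<close> \<open>p < q\<close> unfolding r_def by (auto simp: min_def)
    have "D p < D r"
    proof (rule DERIV_pos_imp_increasing_open[OF \<open>p < r\<close>])
      fix s assume "p < s" "s < r"
      then have "s \<in> {p..<q}" "P s > 0" using b \<open>r < q\<close> \<open>r < b\<close> by auto
      then show "\<exists>z. (D has_real_derivative z) (at s) \<and> z > 0"
        using dD D_strict by blast
    next
      show "continuous_on {p..r} D"
        using \<open>r < q\<close> by (intro continuous_on_subset[OF cD]) auto
    qed
    then show ?thesis
      using that[of r] start b[of r] \<open>p < r\<close> \<open>r < q\<close> \<open>r < b\<close> by auto
  qed
  show ?thesis
  proof (rule cooperative_pair_stays_positive[of r q D D' P P'])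
    show "continuous_on {r..q} D"
      using r by (intro continuous_on_subset[OF cD]) auto
  qed (use r in \<open>auto intro!: dD dP P_incr D_incr\<close>)
qed

lemma exp_weighted_integral_bound:
  fixes f :: "real \<Rightarrow> real"
  assumes "K > 0" "\<alpha> \<le> t" "f integrable_on {\<alpha>..t}"
    and bound: "\<And>y. y \<in> {\<alpha>..t} \<Longrightarrow> \<bar>f y\<bar> \<le> M * exp (K * y)"
  shows "exp (- K * t) * \<bar>integral {\<alpha>..t} f\<bar> \<le> M / K"
proof -
  have "0 \<le> M * exp (K * \<alpha>)"
    using bound[of \<alpha>] \<open>\<alpha> \<le> t\<close> abs_ge_zero order_trans by fastforce
  then have "M \<ge> 0"
    by (simp add: zero_le_mult_iff)
  have prim: "((\<lambda>y. M * exp (K * y)) has_integral M * exp (K * t) / K - M * exp (K * \<alpha>) / K) {\<alpha>..t}"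
  proof (rule fundamental_theorem_of_calculus[OF \<open>\<alpha> \<le> t\<close>])
    fix y :: real
    have "((\<lambda>y. M * exp (K * y) / K) has_real_derivative M * exp (K * y)) (at y within {\<alpha>..t})"
      using \<open>K > 0\<close> by (auto intro!: derivative_eq_intros)
    then show "((\<lambda>y. M * exp (K * y) / K) has_vector_derivative M * exp (K * y))
        (at y within {\<alpha>..t})"
      by (simp add: has_real_derivative_iff_has_vector_derivative)
  qed
  have "\<bar>integral {\<alpha>..t} f\<bar> \<le> integral {\<alpha>..t} (\<lambda>y. M * exp (K * y))"
    using integral_norm_bound_integral[OF assms(3) has_integral_integrable[OF prim]] bound by simp
  also have "\<dots> \<le> M * exp (K * t) / K"
    using integral_unique[OF prim] \<open>M \<ge> 0\<close> \<open>K > 0\<close> by simp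
  finally have "exp (- K * t) * \<bar>integral {\<alpha>..t} f\<bar> \<le> exp (- K * t) * (M * exp (K * t) / K)"
    by (rule mult_left_mono) simp
  also have "\<dots> = M / K"
    by (simp add: mult_exp_exp)
  finally show ?thesis .
qed

lemma primitive_has_real_derivative:
  fixes f h :: "real \<Rightarrow> real"
  assumes "continuous_on {\<alpha>..\<beta>} h" "\<And>t. t \<in> {\<alpha>..\<beta>} \<Longrightarrow> f t = c + integral {\<alpha>..t} h"
    and x: "x \<in> {\<alpha><..<\<beta>}"
  shows "(f has_real_derivative h x) (at x)"
proof -
  have "((\<lambda>t. integral {\<alpha>..t} h) has_real_derivative h x) (at x within {\<alpha>..\<beta>})"
    using x by (intro integral_has_real_derivative[OF assms(1)]) auto
  then have "((\<lambda>t. c + integral {\<alpha>..t} h) has_real_derivative h x) (at x)"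
    using x at_within_Icc_at[of \<alpha> x \<beta>] by (auto intro!: derivative_eq_intros)
  then show ?thesis
    by (rule has_field_derivative_transform_within_open[where S = "{\<alpha><..<\<beta>}"])
      (use assms(2) x in auto)
qed

lemma apply_Bcontfun_ext_cont:
  fixes f :: "real \<Rightarrow> real"
  assumes "continuous_on {\<alpha>..\<beta>} f"
  shows "apply_bcontfun (Bcontfun (ext_cont f \<alpha> \<beta>)) = ext_cont f \<alpha> \<beta>"
proof (rule Bcontfun_inverse)
  have "bounded (f ` cbox \<alpha> \<beta>)"
    using assms by (intro compact_imp_bounded compact_continuous_image) auto
  then show "ext_cont f \<alpha> \<beta> \<in> bcontfun"
    using assms unfolding bcontfun_def ext_cont_def
    by (auto intro!: clamp_continuous_on clamp_bounded)
qed

lemma lipschitz_on_Icc_if_locally_lipschitz: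
  fixes f :: "real \<Rightarrow> real"
  assumes local: "\<And>x. \<exists>e>0. \<exists>C. C-lipschitz_on (ball x e) f"
  shows "\<exists>C. C-lipschitz_on {\<alpha>..\<beta>} f"
proof -
  have ll: "local_lipschitz {0::real} {\<alpha>..\<beta>} (\<lambda>_. f)"
  proof (rule local_lipschitzI)
    fix t x :: real
    obtain e C where "e > 0" "C-lipschitz_on (ball x e) f"
      using local by blast
    moreover have "cball x (e / 2) \<inter> {\<alpha>..\<beta>} \<subseteq> ball x e"
      using \<open>e > 0\<close> by auto
    ultimately have "C-lipschitz_on (cball x (e / 2) \<inter> {\<alpha>..\<beta>}) f"
      using lipschitz_on_subset by blast
    then show "\<exists>u>0. \<exists>L. \<forall>t\<in>cball t u \<inter> {0}. L-lipschitz_on (cball x u \<inter> {\<alpha>..\<beta>}) f"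
      using \<open>e > 0\<close> by (intro exI[of _ "e / 2"]) auto
  qed
  obtain C where "\<And>t. t \<in> {0::real} \<Longrightarrow> C-lipschitz_on {\<alpha>..\<beta>} f"
    using local_lipschitz_compact_implies_lipschitz[OF ll compact_Icc compact_sing] by auto
  then show ?thesis by blast
qed

lemma C1_on_with_deriv_continuous: "C1_on_with_deriv S h d \<Longrightarrow> continuous_on S h"
  unfolding C1_on_with_deriv_def by (metis DERIV_continuous_on)

lemma C1_on_with_deriv_interior:
  assumes "C1_on_with_deriv {\<alpha>..\<beta>} h d" "x \<in> {\<alpha><..<\<beta>}"
  shows "(h has_real_derivative d x) (at x)"
  using assms unfolding C1_on_with_deriv_def
  by (metis at_within_Icc_at greaterThanLessThan_iff atLeastAtMost_iff less_imp_le)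

section \<open>The first-order system\<close>

locale sturm_liouville =
  fixes L :: real and a b :: "real \<Rightarrow> real"
  assumes L_pos: "L > 0"
    and a_cont: "continuous_on {-L..L} a" and b_cont: "continuous_on {-L..L} b"
    and a_pos: "\<And>x. x \<in> {-L..L} \<Longrightarrow> a x > 0" and b_pos: "\<And>x. x \<in> {-L..L} \<Longrightarrow> b x > 0"
begin

text \<open>\<open>w = a u'\<close> is the flux; the equation of the theorem is the case \<open>F = g = -f\<close>.\<close>

definition ode_sol :: "(real \<Rightarrow> real) \<Rightarrow> (real \<Rightarrow> real) \<Rightarrow> (real \<Rightarrow> real) \<Rightarrow> bool" where
  "ode_sol F u w \<longleftrightarrow> continuous_on {-L..L} u \<and>
     (\<forall>x\<in>{-L<..<L}. (u has_real_derivative w x / a x) (at x) \<and>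
                      (w has_real_derivative b x * F (u x)) (at x))"

lemma a_nonzero: "x \<in> {-L..L} \<Longrightarrow> a x \<noteq> 0"
  using a_pos by force

lemma ode_solD:
  assumes "ode_sol F u w"
  shows "continuous_on {-L..L} u"
    and "x \<in> {-L<..<L} \<Longrightarrow> (u has_real_derivative w x / a x) (at x)"
    and "x \<in> {-L<..<L} \<Longrightarrow> (w has_real_derivative b x * F (u x)) (at x)"
  using assms unfolding ode_sol_def by blast+

lemma ode_sol_w_continuous: "ode_sol F u w \<Longrightarrow> continuous_on {-L<..<L} w"
  by (intro continuous_at_imp_continuous_on ballI DERIV_isCont) (rule ode_solD(3))

lemma coefficient_bound:
  obtains K where "\<And>x. x \<in> {-L..L} \<Longrightarrow> 1 / a x + C * b x \<le> K"
proof -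
  have "continuous_on {-L..L} (\<lambda>x. 1 / a x + C * b x)"
    using a_nonzero by (intro continuous_intros a_cont b_cont) auto
  then have "bounded ((\<lambda>x. 1 / a x + C * b x) ` {-L..L})"
    by (intro compact_imp_bounded compact_continuous_image) auto
  then obtain K where K: "\<forall>x\<in>{-L..L}. \<bar>1 / a x + C * b x\<bar> \<le> K"
    unfolding bounded_iff by auto
  show ?thesis
  proof (rule that)
    fix x assume "x \<in> {-L..L}"
    then show "1 / a x + C * b x \<le> K"
      using K abs_le_D1 by blast
  qed
qed

lemma ode_sol_unique:
  assumes F: "\<And>R. \<exists>C. C-lipschitz_on {-R..R} F"
    and sol1: "ode_sol F u1 w1" and sol2: "ode_sol F u2 w2"
    and x0: "x0 \<in> {-L<..<L}" and "u1 x0 = u2 x0" "w1 x0 = w2 x0"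
    and x: "x \<in> {-L<..<L}"
  shows "u1 x = u2 x \<and> w1 x = w2 x"
proof -
  obtain R1 R2 where R1: "\<And>t. t \<in> {-L..L} \<Longrightarrow> \<bar>u1 t\<bar> \<le> R1"
    and R2: "\<And>t. t \<in> {-L..L} \<Longrightarrow> \<bar>u2 t\<bar> \<le> R2"
    using continuous_on_Icc_abs_bound ode_solD(1)[OF sol1] ode_solD(1)[OF sol2] by metis
  have R: "u1 t \<in> {-max R1 R2..max R1 R2}" "u2 t \<in> {-max R1 R2..max R1 R2}" if "t \<in> {-L..L}" for t
    using R1[OF that] R2[OF that] by (auto simp: abs_le_iff le_max_iff_disj)
  obtain C where C: "C-lipschitz_on {-max R1 R2..max R1 R2} F"
    using F by blast
  obtain K where K: "\<And>t. t \<in> {-L..L} \<Longrightarrow> 1 / a t + C * b t \<le> K"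
    using coefficient_bound by blast
  define du dw where "du t = u1 t - u2 t" and "dw t = w1 t - w2 t" for t
  define y where "y t = (du t)\<^sup>2 + (dw t)\<^sup>2" for t
  define y' where "y' t = 2 * du t * (dw t / a t) + 2 * dw t * (b t * (F (u1 t) - F (u2 t)))" for t
  have "y x = 0"
  proof (rule gronwall_vanishing[OF _ _ _ x0 _ x])
    fix t assume t: "t \<in> {-L<..<L}"
    have "(du has_real_derivative dw t / a t) (at t)"
      unfolding du_def[abs_def] dw_def
      using DERIV_diff[OF ode_solD(2)[OF sol1 t] ode_solD(2)[OF sol2 t]]
      by (simp add: diff_divide_distrib)
    moreover have "(dw has_real_derivative b t * (F (u1 t) - F (u2 t))) (at t)"
      unfolding dw_def[abs_def]
      using DERIV_diff[OF ode_solD(3)[OF sol1 t] ode_solD(3)[OF sol2 t]]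
      by (simp add: right_diff_distrib)
    ultimately show "(y has_real_derivative y' t) (at t)"
      unfolding y_def[abs_def] y'_def
      by (rule DERIV_cong[OF DERIV_add[OF DERIV_power DERIV_power]]) simp
    have "\<bar>F (u1 t) - F (u2 t)\<bar> \<le> C * \<bar>du t\<bar>"
      using lipschitz_onD[OF C, of "u1 t" "u2 t"] R t unfolding du_def dist_real_def by auto
    then have "\<bar>y' t\<bar> \<le> (1 / a t + C * b t) * y t"
      unfolding y'_def y_def
      using cross_term_bound a_pos[of t] b_pos[of t] lipschitz_on_nonneg[OF C] t by simp
    also have "\<dots> \<le> K * y t"
      using K[of t] t unfolding y_def by (intro mult_right_mono) auto
    finally show "\<bar>y' t\<bar> \<le> K * y t" .
  qed (use \<open>u1 x0 = u2 x0\<close> \<open>w1 x0 = w2 x0\<close> in \<open>auto simp: y_def du_def dw_def\<close>)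
  then show ?thesis
    unfolding y_def du_def dw_def by (simp add: sum_power2_eq_zero_iff)
qed

lemma ode_sol_const: "F v = 0 \<Longrightarrow> ode_sol F (\<lambda>_. v) (\<lambda>_. 0)"
  unfolding ode_sol_def by (auto intro!: derivative_eq_intros)

lemma ode_sol_rest_point_const:
  assumes F: "\<And>R. \<exists>C. C-lipschitz_on {-R..R} F"
    and sol: "ode_sol F u w" and x0: "x0 \<in> {-L<..<L}" and "w x0 = 0" "F (u x0) = 0"
    and x: "x \<in> {-L..L}"
  shows "u x = u x0"
proof (rule continuous_on_Icc_eq_if_eq_on_interior[OF _ ode_solD(1)[OF sol] _ x])
  fix t assume "t \<in> {-L<..<L}"
  then show "u t = u x0"
    using ode_sol_unique[OF F sol ode_sol_const[of F "u x0", OF \<open>F (u x0) = 0\<close>] x0] \<open>w x0 = 0\<close>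
    by simp
qed (use L_pos in auto)

lemma ode_sol_no_rest_point:
  assumes F: "\<And>R. \<exists>C. C-lipschitz_on {-R..R} F"
    and sol: "ode_sol F u w" and "u L \<noteq> u (-L)"
    and x: "x \<in> {-L<..<L}" and "w x = 0" "F (u x) = 0"
  shows False
  using ode_sol_rest_point_const[OF F sol x assms(5,6), of L]
    ode_sol_rest_point_const[OF F sol x assms(5,6), of "-L"] L_pos assms(3) by simp

lemma ode_sol_flux_zero_at_extremum:
  assumes sol: "ode_sol F u w" and x: "x \<in> {-L<..<L}"
    and extremal: "(\<forall>y\<in>{-L..L}. u y \<le> u x) \<or> (\<forall>y\<in>{-L..L}. u x \<le> u y)"
  shows "w x = 0"
proof -
  define d where "d = min (x + L) (L - x)"
  have "d > 0" "\<And>y. \<bar>x - y\<bar> < d \<Longrightarrow> y \<in> {-L..L}"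
    using x unfolding d_def by auto
  then have "w x / a x = 0"
    using extremal DERIV_local_max[OF ode_solD(2)[OF sol x]]
      DERIV_local_min[OF ode_solD(2)[OF sol x]]
    by blast
  then show ?thesis
    using a_nonzero x by simp
qed

definition inv_a_primitive :: "real \<Rightarrow> real" where
  "inv_a_primitive x = integral {-L..x} (\<lambda>y. 1 / a y)"

lemma inv_a_continuous: "continuous_on {-L..L} (\<lambda>y. 1 / a y)"
  using a_nonzero by (intro continuous_intros a_cont) auto

lemma inv_a_primitive_deriv:
  "x \<in> {-L<..<L} \<Longrightarrow> (inv_a_primitive has_real_derivative 1 / a x) (at x)"
  unfolding inv_a_primitive_def[abs_def]
  by (rule primitive_has_real_derivative[OF inv_a_continuous, where c = 0]) auto

lemma inv_a_primitive_continuous: "continuous_on {-L..L} inv_a_primitive"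
  unfolding inv_a_primitive_def[abs_def]
  by (rule indefinite_integral_continuous_1[OF integrable_continuous_interval[OF inv_a_continuous]])

lemma inv_a_primitive_less:
  assumes "x \<in> {-L..L}" "y \<in> {-L..L}" "x < y"
  shows "inv_a_primitive x < inv_a_primitive y"
proof (rule DERIV_pos_imp_increasing_open[OF \<open>x < y\<close>])
  fix t assume "x < t" "t < y"
  then have "t \<in> {-L<..<L}" "a t > 0" using assms a_pos[of t] by auto
  then show "\<exists>z. (inv_a_primitive has_real_derivative z) (at t) \<and> z > 0"
    using inv_a_primitive_deriv[of t] by (intro exI[of _ "1 / a t"]) simp
next
  show "continuous_on {x..y} inv_a_primitive"
    using assms by (intro continuous_on_subset[OF inv_a_primitive_continuous]) auto
qed

lemma inv_a_primitive_le_iff: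
  assumes "x \<in> {-L..L}" "y \<in> {-L..L}"
  shows "inv_a_primitive x \<le> inv_a_primitive y \<longleftrightarrow> x \<le> y"
proof
  assume "inv_a_primitive x \<le> inv_a_primitive y"
  then show "x \<le> y"
    using inv_a_primitive_less[OF assms(2,1)] by (meson linorder_not_le)
next
  assume "x \<le> y"
  then show "inv_a_primitive x \<le> inv_a_primitive y"
    using inv_a_primitive_less[OF assms] by (cases "x = y") auto
qed

lemma inv_a_integral_pos: "integral {-L..L} (\<lambda>y. 1 / a y) > 0"
  using inv_a_primitive_less[of "-L" L] L_pos unfolding inv_a_primitive_def by simp

end

section \<open>Existence by shooting\<close>

type_synonym bcontfun_pair = "(real \<Rightarrow>\<^sub>C real) \<times> (real \<Rightarrow>\<^sub>C real)"

lemma dist_bcontfun_pair_le: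
  "dist (p :: bcontfun_pair) q \<le> dist (fst p) (fst q) + dist (snd p) (snd q)"
  by (cases p; cases q) (simp add: dist_Pair_Pair sqrt_sum_squares_le_sum)

locale shooting = sturm_liouville +
  fixes F :: "real \<Rightarrow> real" and C K u0 :: real
  assumes F_lipschitz: "C-lipschitz_on UNIV F"
    and K_pos: "K > 0"
    and K_large: "\<And>x. x \<in> {-L..L} \<Longrightarrow> 4 / a x \<le> K \<and> 4 * C * b x \<le> K"
begin

text \<open>Bielecki's trick: the unknowns \<open>(u, w)\<close> are stored as \<open>(exp (-K x) u, exp (-K x) w)\<close>,
  which \<open>unweight\<close> undoes. \<open>picard s\<close> is the integral form of the initial value problem
  \<open>u(-L) = u0\<close>, \<open>w(-L) = s\<close> in these variables, and \<open>K_large\<close> makes it a contraction with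
  constant \<open>1/2\<close>.\<close>

definition unweight :: "(real \<Rightarrow>\<^sub>C real) \<Rightarrow> real \<Rightarrow> real" where
  "unweight p x = exp (K * clamp (-L) L x) * p x"

definition extend :: "(real \<Rightarrow> real) \<Rightarrow> real \<Rightarrow>\<^sub>C real" where
  "extend f = Bcontfun (ext_cont f (-L) L)"

definition picard :: "real \<Rightarrow> bcontfun_pair \<Rightarrow> bcontfun_pair" where
  "picard s p =
    (extend (\<lambda>x. exp (- K * x) * (u0 + integral {-L..x} (\<lambda>y. unweight (snd p) y / a y))),
     extend (\<lambda>x. exp (- K * x) * (s + integral {-L..x} (\<lambda>y. b y * F (unweight (fst p) y)))))"

lemma unweight_continuous: "continuous_on S (unweight p)"
proof -
  have "continuous_on S (\<lambda>x. exp (K * clamp (-L) L x))"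
    by (rule clamp_continuous_on[where f = "\<lambda>y. exp (K * y)"]) (intro continuous_intros)
  then show ?thesis
    unfolding unweight_def by (rule continuous_on_mult[OF _ continuous_on_apply_bcontfun])
qed

lemma unweight_in_interval: "x \<in> {-L..L} \<Longrightarrow> unweight p x = exp (K * x) * p x"
  unfolding unweight_def by simp

lemma unweight_dist:
  assumes "x \<in> {-L..L}"
  shows "\<bar>unweight p x - unweight q x\<bar> \<le> exp (K * x) * dist p q"
proof -
  have "\<bar>p x - q x\<bar> \<le> dist p q"
    using dist_bounded[of p x q] by (simp add: dist_real_def)
  then show ?thesis
    unfolding unweight_in_interval[OF assms] right_diff_distrib[symmetric] abs_mult by simp
qed

lemma unweight_pair_dist:
  assumes "y \<in> {-L..L}"
  shows "\<bar>unweight (fst p) y - unweight (fst q) y\<bar> \<le> exp (K * y) * dist p q"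
    and "\<bar>unweight (snd p) y - unweight (snd q) y\<bar> \<le> exp (K * y) * dist p q"
  using unweight_dist[OF assms, of "fst p" "fst q"] unweight_dist[OF assms, of "snd p" "snd q"]
    dist_fst_le[of p q] dist_snd_le[of p q]
  by (meson exp_ge_zero mult_left_mono order_trans)+

lemma F_continuous: "continuous_on S F"
  using lipschitz_on_continuous_on[OF F_lipschitz] continuous_on_subset by blast

lemma integral_continuous:
  fixes h :: "real \<Rightarrow> real"
  assumes "continuous_on {-L..L} h"
  shows "continuous_on {-L..L} (\<lambda>x. integral {-L..x} h)"
  by (rule indefinite_integral_continuous_1[OF integrable_continuous_interval[OF assms]])

lemma extend_apply: "continuous_on {-L..L} f \<Longrightarrow> x \<in> {-L..L} \<Longrightarrow> extend f x = f x"
  unfolding extend_def by (simp add: apply_Bcontfun_ext_cont)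

lemma dist_extend_le:
  assumes "continuous_on {-L..L} f" "continuous_on {-L..L} g"
    and "\<And>x. x \<in> {-L..L} \<Longrightarrow> \<bar>f x - g x\<bar> \<le> B"
  shows "dist (extend f) (extend g) \<le> B"
proof (rule dist_bound)
  fix x
  define y where "y = clamp (-L) L x"
  have "y \<in> {-L..L}"
    using clamp_in_interval[of "-L" L x] L_pos unfolding y_def by simp
  moreover have "extend f x = f y" "extend g x = g y"
    using apply_Bcontfun_ext_cont[OF assms(1)] apply_Bcontfun_ext_cont[OF assms(2)]
    unfolding extend_def ext_cont_def y_def by simp_all
  ultimately show "dist (extend f x) (extend g x) \<le> B"
    using assms(3) by (simp add: dist_real_def)
qed

lemma picard_integrands_continuous:
  "continuous_on {-L..L} (\<lambda>y. unweight p y / a y)"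
  "continuous_on {-L..L} (\<lambda>y. b y * F (unweight p y))"
  using a_nonzero
  by (auto intro!: continuous_intros unweight_continuous a_cont b_cont
      continuous_on_compose2[OF F_continuous unweight_continuous])

lemma dist_weighted_primitives_le:
  assumes "continuous_on {-L..L} h1" "continuous_on {-L..L} h2"
    and bound: "\<And>y. y \<in> {-L..L} \<Longrightarrow> \<bar>h1 y - h2 y\<bar> \<le> M * exp (K * y)"
  shows "dist (extend (\<lambda>x. exp (- K * x) * (c + integral {-L..x} h1)))
              (extend (\<lambda>x. exp (- K * x) * (c + integral {-L..x} h2))) \<le> M / K"
proof (rule dist_extend_le)
  fix x assume x: "x \<in> {-L..L}"
  have "(\<lambda>y. h1 y - h2 y) integrable_on {-L..x}"
    using x
    by (intro integrable_continuous_interval continuous_on_subset[OF continuous_on_diff[OF assms(1,2)]])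
      auto
  moreover have "integral {-L..x} (\<lambda>y. h1 y - h2 y) = integral {-L..x} h1 - integral {-L..x} h2"
    using x by (intro integral_diff integrable_continuous_interval continuous_on_subset[OF assms(1)]
        continuous_on_subset[OF assms(2)]) auto
  ultimately have "exp (- K * x) * \<bar>integral {-L..x} h1 - integral {-L..x} h2\<bar> \<le> M / K"
    using exp_weighted_integral_bound[OF K_pos, of "-L" x] x bound by fastforce
  then show "\<bar>exp (- K * x) * (c + integral {-L..x} h1) - exp (- K * x) * (c + integral {-L..x} h2)\<bar>
      \<le> M / K"
    by (simp add: abs_mult right_diff_distrib[symmetric])
qed (intro continuous_intros integral_continuous assms(1,2))+

lemma picard_contraction: "dist (picard s p) (picard s q) \<le> dist p q / 2"
proof -
  define D where "D = dist p q"
  have "dist (fst (picard s p)) (fst (picard s q)) \<le> D * K / 4 / K"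
    unfolding picard_def fst_conv
  proof (rule dist_weighted_primitives_le[OF picard_integrands_continuous(1)
        picard_integrands_continuous(1)])
    fix y assume y: "y \<in> {-L..L}"
    have "\<bar>unweight (snd p) y / a y - unweight (snd q) y / a y\<bar>
        = (1 / a y) * \<bar>unweight (snd p) y - unweight (snd q) y\<bar>"
      using a_pos[OF y] by (simp add: abs_divide diff_divide_distrib[symmetric])
    also have "\<dots> \<le> (K / 4) * (exp (K * y) * D)"
      using unweight_pair_dist(2)[OF y, of p q] K_large[OF y] a_pos[OF y] K_pos unfolding D_def
      by (intro mult_mono) auto
    finally show "\<bar>unweight (snd p) y / a y - unweight (snd q) y / a y\<bar> \<le> D * K / 4 * exp (K * y)"
      by (simp add: ac_simps)
  qed
  moreover have "dist (snd (picard s p)) (snd (picard s q)) \<le> D * K / 4 / K"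
    unfolding picard_def snd_conv
  proof (rule dist_weighted_primitives_le[OF picard_integrands_continuous(2)
        picard_integrands_continuous(2)])
    fix y assume y: "y \<in> {-L..L}"
    have "\<bar>F (unweight (fst p) y) - F (unweight (fst q) y)\<bar>
        \<le> C * \<bar>unweight (fst p) y - unweight (fst q) y\<bar>"
      using lipschitz_onD[OF F_lipschitz] by (simp add: dist_real_def)
    then have "\<bar>b y * F (unweight (fst p) y) - b y * F (unweight (fst q) y)\<bar>
        \<le> (C * b y) * \<bar>unweight (fst p) y - unweight (fst q) y\<bar>"
      using b_pos[OF y]
      by (simp add: abs_mult right_diff_distrib[symmetric] ac_simps mult_left_mono)
    also have "\<dots> \<le> (K / 4) * (exp (K * y) * D)"
      using unweight_pair_dist(1)[OF y, of p q] K_large[OF y] b_pos[OF y] K_pos unfolding D_def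
      by (intro mult_mono) auto
    finally show
      "\<bar>b y * F (unweight (fst p) y) - b y * F (unweight (fst q) y)\<bar> \<le> D * K / 4 * exp (K * y)"
      by (simp add: ac_simps)
  qed
  ultimately show ?thesis
    using dist_bcontfun_pair_le[of "picard s p" "picard s q"] K_pos unfolding D_def by simp
qed

lemma picard_shift: "dist (picard s p) (picard r p) \<le> exp (K * L) * \<bar>s - r\<bar>"
proof -
  have "dist (snd (picard s p)) (snd (picard r p)) \<le> exp (K * L) * \<bar>s - r\<bar>"
    unfolding picard_def snd_conv
  proof (rule dist_extend_le)
    fix x assume "x \<in> {-L..L}"
    then have "K * (- x) \<le> K * L"
      using K_pos by (intro mult_left_mono) auto
    then have "exp (- K * x) \<le> exp (K * L)"
      by simp
    then show "\<bar>exp (- K * x) * (s + integral {-L..x} (\<lambda>y. b y * F (unweight (fst p) y)))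
        - exp (- K * x) * (r + integral {-L..x} (\<lambda>y. b y * F (unweight (fst p) y)))\<bar>
        \<le> exp (K * L) * \<bar>s - r\<bar>"
      by (simp add: abs_mult right_diff_distrib[symmetric] mult_right_mono)
  qed (intro continuous_intros integral_continuous picard_integrands_continuous)+
  moreover have "fst (picard s p) = fst (picard r p)"
    unfolding picard_def by simp
  ultimately show ?thesis
    using dist_bcontfun_pair_le[of "picard s p" "picard r p"] by simp
qed

definition fixpoint :: "real \<Rightarrow> bcontfun_pair" where
  "fixpoint s = (THE p. picard s p = p)"

lemma picard_fixpoint: "picard s (fixpoint s) = fixpoint s"
  unfolding fixpoint_def
  by (rule theI'[OF banach_fix_type[of "1/2"]]) (use picard_contraction in auto)

lemma fixpoint_lipschitz: "dist (fixpoint s) (fixpoint r) \<le> 2 * exp (K * L) * \<bar>s - r\<bar>"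
proof -
  have "dist (fixpoint s) (fixpoint r) = dist (picard s (fixpoint s)) (picard r (fixpoint r))"
    using picard_fixpoint by simp
  also have "\<dots> \<le> dist (picard s (fixpoint s)) (picard r (fixpoint s))
      + dist (picard r (fixpoint s)) (picard r (fixpoint r))"
    by (rule dist_triangle)
  also have "\<dots> \<le> exp (K * L) * \<bar>s - r\<bar> + dist (fixpoint s) (fixpoint r) / 2"
    using picard_shift picard_contraction by (rule add_mono)
  finally show ?thesis by simp
qed

definition shot_u :: "real \<Rightarrow> real \<Rightarrow> real" where
  "shot_u s = unweight (fst (fixpoint s))"

definition shot_w :: "real \<Rightarrow> real \<Rightarrow> real" where
  "shot_w s = unweight (snd (fixpoint s))"

lemma shot_integral_eqs:
  assumes x: "x \<in> {-L..L}"
  shows "shot_u s x = u0 + integral {-L..x} (\<lambda>y. shot_w s y / a y)"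
    and "shot_w s x = s + integral {-L..x} (\<lambda>y. b y * F (shot_u s y))"
proof -
  have "fst (fixpoint s) x
      = extend (\<lambda>x. exp (- K * x) * (u0 + integral {-L..x} (\<lambda>y. shot_w s y / a y))) x"
    using arg_cong[OF picard_fixpoint[of s], of fst] unfolding picard_def shot_w_def by simp
  also have "\<dots> = exp (- K * x) * (u0 + integral {-L..x} (\<lambda>y. shot_w s y / a y))"
    unfolding shot_w_def
    by (rule extend_apply[OF _ x])
      (intro continuous_intros integral_continuous picard_integrands_continuous)
  finally have fst_eq:
    "fst (fixpoint s) x = exp (- K * x) * (u0 + integral {-L..x} (\<lambda>y. shot_w s y / a y))" .
  have "snd (fixpoint s) x
      = extend (\<lambda>x. exp (- K * x) * (s + integral {-L..x} (\<lambda>y. b y * F (shot_u s y)))) x"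
    using arg_cong[OF picard_fixpoint[of s], of snd] unfolding picard_def shot_u_def by simp
  also have "\<dots> = exp (- K * x) * (s + integral {-L..x} (\<lambda>y. b y * F (shot_u s y)))"
    unfolding shot_u_def
    by (rule extend_apply[OF _ x])
      (intro continuous_intros integral_continuous picard_integrands_continuous)
  finally have snd_eq:
    "snd (fixpoint s) x = exp (- K * x) * (s + integral {-L..x} (\<lambda>y. b y * F (shot_u s y)))" .
  show "shot_u s x = u0 + integral {-L..x} (\<lambda>y. shot_w s y / a y)"
    unfolding shot_u_def unweight_in_interval[OF x] fst_eq by (simp add: mult_exp_exp)
  show "shot_w s x = s + integral {-L..x} (\<lambda>y. b y * F (shot_u s y))"
    unfolding shot_w_def unweight_in_interval[OF x] snd_eq by (simp add: mult_exp_exp)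
qed

lemma shot_ode_sol: "ode_sol F (shot_u s) (shot_w s)"
  unfolding ode_sol_def
proof (intro conjI ballI)
  show "continuous_on {-L..L} (shot_u s)"
    unfolding shot_u_def by (rule unweight_continuous)
  fix x assume x: "x \<in> {-L<..<L}"
  show "(shot_u s has_real_derivative shot_w s x / a x) (at x)"
    by (rule primitive_has_real_derivative[OF _ shot_integral_eqs(1) x])
       (use picard_integrands_continuous(1) in \<open>simp_all add: shot_w_def\<close>)
  show "(shot_w s has_real_derivative b x * F (shot_u s x)) (at x)"
    by (rule primitive_has_real_derivative[OF _ shot_integral_eqs(2) x])
       (use picard_integrands_continuous(2) in \<open>simp_all add: shot_u_def\<close>)
qed

lemma shot_u_start: "shot_u s (-L) = u0"
  using shot_integral_eqs(1)[of "-L" s] L_pos by simp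

lemma continuous_shot_u_end: "continuous_on UNIV (\<lambda>s. shot_u s L)"
proof (rule lipschitz_on_continuous_on)
  show "(exp (K * L) * (2 * exp (K * L)))-lipschitz_on UNIV (\<lambda>s. shot_u s L)"
  proof (rule lipschitz_onI)
    fix s r :: real
    have "L \<in> {-L..L}" using L_pos by simp
    then have "\<bar>shot_u s L - shot_u r L\<bar> \<le> exp (K * L) * dist (fixpoint s) (fixpoint r)"
      unfolding shot_u_def by (rule unweight_pair_dist(1))
    also have "\<dots> \<le> exp (K * L) * (2 * exp (K * L) * \<bar>s - r\<bar>)"
      using fixpoint_lipschitz by (intro mult_left_mono) auto
    finally show "dist (shot_u s L) (shot_u r L) \<le> exp (K * L) * (2 * exp (K * L)) * dist s r"
      by (simp add: dist_real_def mult.assoc)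
  qed simp
qed

lemma shot_w_close:
  assumes F_bound: "\<And>r. \<bar>F r\<bar> \<le> M" and y: "y \<in> {-L..L}"
  shows "\<bar>shot_w s y - s\<bar> \<le> M * integral {-L..L} b"
proof -
  have Mb_int: "(\<lambda>t. M * b t) integrable_on {-L..y}" "(\<lambda>t. M * b t) integrable_on {-L..L}"
    using y
    by (intro integrable_continuous_interval continuous_intros continuous_on_subset[OF b_cont]; auto)+
  have "(\<lambda>t. b t * F (shot_u s t)) integrable_on {-L..y}"
    using y unfolding shot_u_def
    by (intro integrable_continuous_interval continuous_on_subset[OF picard_integrands_continuous(2)])
      auto
  moreover have "\<bar>b t * F (shot_u s t)\<bar> \<le> M * b t" if "t \<in> {-L..y}" for t
  proof -
    have "b t > 0" using b_pos[of t] that y by auto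
    then have "\<bar>b t * F (shot_u s t)\<bar> = b t * \<bar>F (shot_u s t)\<bar>"
      by (simp add: abs_mult)
    also have "\<dots> \<le> b t * M"
      using F_bound \<open>b t > 0\<close> by (intro mult_left_mono) auto
    finally show ?thesis by (simp only: mult.commute)
  qed
  ultimately have
    "norm (integral {-L..y} (\<lambda>t. b t * F (shot_u s t))) \<le> integral {-L..y} (\<lambda>t. M * b t)"
    using Mb_int(1) by (intro integral_norm_bound_integral) auto
  also have "\<dots> \<le> integral {-L..L} (\<lambda>t. M * b t)"
  proof (rule integral_subset_le)
    have "M \<ge> 0"
      using F_bound[of 0] by linarith
    then show "\<forall>t \<in> {-L..L}. 0 \<le> M * b t"
      using b_pos by (simp add: less_imp_le)
  qed (use y Mb_int in auto)
  finally show ?thesis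
    using shot_integral_eqs(2)[OF y, of s] by (simp add: integral_mult[symmetric])
qed

lemma shot_u_end_bounds:
  assumes F_bound: "\<And>r. \<bar>F r\<bar> \<le> M"
  defines "B \<equiv> M * integral {-L..L} b" and "T \<equiv> integral {-L..L} (\<lambda>y. 1 / a y)"
  shows "(s - B) * T \<le> shot_u s L - u0" and "shot_u s L - u0 \<le> (s + B) * T"
proof -
  have "L \<in> {-L..L}" using L_pos by simp
  then have end_eq: "shot_u s L - u0 = integral {-L..L} (\<lambda>y. shot_w s y / a y)"
    using shot_integral_eqs(1) by simp
  have w_int: "(\<lambda>y. shot_w s y / a y) integrable_on {-L..L}"
    unfolding shot_w_def
    by (rule integrable_continuous_interval[OF picard_integrands_continuous(1)])
  have a_int: "(\<lambda>y. 1 / a y) integrable_on {-L..L}"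
    by (rule integrable_continuous_interval[OF inv_a_continuous])
  have ca_int: "(\<lambda>y. c * (1 / a y)) integrable_on {-L..L}" for c
    by (intro integrable_continuous_interval continuous_intros inv_a_continuous)
  have w_close: "s - B \<le> shot_w s y" "shot_w s y \<le> s + B" if "y \<in> {-L..L}" for y
    using shot_w_close[OF F_bound that, of s] unfolding B_def by linarith+
  have "(s - B) * T = integral {-L..L} (\<lambda>y. (s - B) * (1 / a y))"
    unfolding T_def by (rule integral_mult[OF a_int])
  also have "\<dots> \<le> integral {-L..L} (\<lambda>y. shot_w s y / a y)"
  proof (rule integral_le)
    fix y assume y: "y \<in> {-L..L}"
    show "(s - B) * (1 / a y) \<le> shot_w s y / a y"
      using divide_right_mono[OF w_close(1)[OF y], of "a y"] a_pos[OF y] by simp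
  qed (use ca_int w_int in auto)
  finally show "(s - B) * T \<le> shot_u s L - u0"
    using end_eq by simp
  have "integral {-L..L} (\<lambda>y. shot_w s y / a y) \<le> integral {-L..L} (\<lambda>y. (s + B) * (1 / a y))"
  proof (rule integral_le)
    fix y assume y: "y \<in> {-L..L}"
    show "shot_w s y / a y \<le> (s + B) * (1 / a y)"
      using divide_right_mono[OF w_close(2)[OF y], of "a y"] a_pos[OF y] by simp
  qed (use ca_int w_int in auto)
  also have "\<dots> = (s + B) * T"
    unfolding T_def by (rule integral_mult[OF a_int, symmetric])
  finally show "shot_u s L - u0 \<le> (s + B) * T"
    using end_eq by simp
qed

end

context sturm_liouville
begin

lemma shooting_exists:
  assumes F_lipschitz: "C-lipschitz_on UNIV F"
  obtains K where "shooting L a b F C K"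
proof -
  have "C \<ge> 0"
    using F_lipschitz by (rule lipschitz_on_nonneg)
  obtain K where K: "\<And>x. x \<in> {-L..L} \<Longrightarrow> 1 / a x + C * b x \<le> K"
    using coefficient_bound by blast
  have "0 \<in> {-L..L}" using L_pos by simp
  then have "0 < 1 / a 0 + C * b 0"
    using a_pos[of 0] b_pos[of 0] \<open>C \<ge> 0\<close> by (simp add: add_pos_nonneg)
  then have "K > 0"
    using K[of 0] \<open>0 \<in> {-L..L}\<close> by linarith
  have "shooting L a b F C (4 * K)"
  proof (intro shooting.intro sturm_liouville_axioms shooting_axioms.intro F_lipschitz conjI)
    show "4 * K > 0" using \<open>K > 0\<close> by simp
    fix x assume x: "x \<in> {-L..L}"
    have "0 \<le> 1 / a x" "0 \<le> C * b x"
      using a_pos[OF x] b_pos[OF x] \<open>C \<ge> 0\<close> by simp_all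
    then show "4 / a x \<le> 4 * K" "4 * C * b x \<le> 4 * K"
      using K[OF x] by linarith+
  qed
  then show ?thesis ..
qed

theorem exists_ode_sol_boundary_values:
  assumes F_lipschitz: "C-lipschitz_on UNIV F" and F_bound: "\<And>r. \<bar>F r\<bar> \<le> M"
  obtains u w where "ode_sol F u w" "u (-L) = u0" "u L = u1"
proof -
  obtain K where "shooting L a b F C K"
    using shooting_exists[OF F_lipschitz] by blast
  then interpret S: shooting L a b F C K u0 .
  define B T where "B = M * integral {-L..L} b" and "T = integral {-L..L} (\<lambda>y. 1 / a y)"
  have "T > 0"
    unfolding T_def by (rule inv_a_integral_pos)
  have "M \<ge> 0"
    using F_bound[of 0] by linarith
  moreover have "integral {-L..L} b \<ge> 0"
    using b_pos
    by (intro integral_nonneg integrable_continuous_interval b_cont) (simp add: less_imp_le)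
  ultimately have "B \<ge> 0"
    unfolding B_def by simp
  define s1 s2 where "s1 = (u1 - u0) / T - B" and "s2 = (u1 - u0) / T + B"
  have "S.shot_u s1 L \<le> u1"
    using S.shot_u_end_bounds(2)[OF F_bound, of s1] \<open>T > 0\<close> unfolding s1_def B_def T_def by simp
  moreover have "u1 \<le> S.shot_u s2 L"
    using S.shot_u_end_bounds(1)[OF F_bound, of s2] \<open>T > 0\<close> unfolding s2_def B_def T_def by simp
  moreover have "s1 \<le> s2"
    unfolding s1_def s2_def using \<open>B \<ge> 0\<close> by simp
  ultimately obtain s where "S.shot_u s L = u1"
    using IVT'[of "\<lambda>s. S.shot_u s L" s1 u1 s2] continuous_on_subset[OF S.continuous_shot_u_end]
    by blast
  then show ?thesis
    using that S.shot_ode_sol S.shot_u_start by blast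
qed

end

section \<open>The symmetric problem\<close>

locale symmetric_bvp = sturm_liouville +
  fixes m :: real and dab G g :: "real \<Rightarrow> real"
  assumes m_pos: "m > 0"
    and a_even: "\<And>x. x \<in> {-L..L} \<Longrightarrow> a (-x) = a x"
    and b_even: "\<And>x. x \<in> {-L..L} \<Longrightarrow> b (-x) = b x"
    and ab_deriv: "\<And>x. x \<in> {0<..<L} \<Longrightarrow> ((\<lambda>x. a x * b x) has_real_derivative dab x) (at x)"
    and dab_nonneg: "\<And>x. x \<in> {0<..<L} \<Longrightarrow> dab x \<ge> 0"
    and G_deriv: "\<And>x. (G has_real_derivative g x) (at x)"
    and g_lipschitz: "\<And>R. \<exists>C. C-lipschitz_on {-R..R} g"
    and G_even: "\<And>x. G (-x) = G x"
    and G_ge: "\<And>x. x > 0 \<Longrightarrow> G m \<le> G x"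
    and g_nonpos: "\<And>x. x \<in> {0<..<m} \<Longrightarrow> g x \<le> 0"
begin

definition ab :: "real \<Rightarrow> real" where
  "ab x = a x * b x"

lemma ab_pos: "x \<in> {-L..L} \<Longrightarrow> ab x > 0"
  unfolding ab_def using a_pos b_pos by simp

lemma ab_even: "x \<in> {-L..L} \<Longrightarrow> ab (-x) = ab x"
  unfolding ab_def using a_even b_even by simp

lemma ab_continuous: "continuous_on {-L..L} ab"
  unfolding ab_def[abs_def] by (intro continuous_intros a_cont b_cont)

lemma ab_mono:
  assumes "0 \<le> x" "x \<le> y" "y \<le> L"
  shows "ab x \<le> ab y"
proof (rule DERIV_nonneg_imp_increasing_open[OF \<open>x \<le> y\<close>])
  fix t assume "x < t" "t < y"
  then have "t \<in> {0<..<L}" using assms by auto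
  then show "\<exists>z. (ab has_real_derivative z) (at t) \<and> 0 \<le> z"
    unfolding ab_def[abs_def] using ab_deriv dab_nonneg by blast
next
  show "continuous_on {x..y} ab"
    using assms by (intro continuous_on_subset[OF ab_continuous]) auto
qed

lemma ab_le_if_abs_le:
  assumes "x \<in> {-L..L}" "y \<in> {-L..L}" "\<bar>x\<bar> \<le> \<bar>y\<bar>"
  shows "ab x \<le> ab y"
proof -
  have "ab x = ab \<bar>x\<bar>" "ab y = ab \<bar>y\<bar>"
    using ab_even assms(1,2) by (simp_all add: abs_if)
  then show ?thesis
    using ab_mono[of "\<bar>x\<bar>" "\<bar>y\<bar>"] assms by auto
qed

lemma g_odd: "g (-x) = - g x"
  by (rule has_real_derivative_odd_if_even[OF G_even G_deriv])

lemma G_continuous: "continuous_on S G"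
  using G_deriv by (intro continuous_at_imp_continuous_on ballI DERIV_isCont) blast

lemma G_min: "G m \<le> G x"
proof -
  have "G m \<le> G 0"
  proof (rule tendsto_lowerbound)
    show "(G \<longlongrightarrow> G 0) (at_right 0)"
      using G_deriv DERIV_isCont continuous_within isCont_def filterlim_at_split by blast
    show "\<forall>\<^sub>F x in at_right 0. G m \<le> G x"
      using G_ge eventually_at_right_less by (rule eventually_mono[rotated])
  qed simp
  then show ?thesis
    using G_ge[of x] G_ge[of "-x"] G_even[of x] by (cases x "0::real" rule: linorder_cases) auto
qed

lemma g_zero_if_G_min: "G v = G m \<Longrightarrow> g v = 0"
  by (rule DERIV_local_min[OF G_deriv[of v], where d = 1]) (use G_min in auto)

lemma g_m: "g m = 0" "g (-m) = 0"
  using g_zero_if_G_min G_even by auto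

lemma g_nonpos_Ico: "0 \<le> s \<Longrightarrow> s < m \<Longrightarrow> g s \<le> 0"
  using g_nonpos[of s] g_odd[of 0] by (cases "s = 0") auto

lemma ode_sol_reflect:
  assumes sol: "ode_sol g u w"
  shows "ode_sol g (\<lambda>x. - u (-x)) (\<lambda>x. w (-x))"
  unfolding ode_sol_def
proof (intro conjI ballI)
  show "continuous_on {-L..L} (\<lambda>x. - u (-x))"
    by (intro continuous_intros continuous_on_compose2[OF ode_solD(1)[OF sol]]) auto
  fix x assume x: "x \<in> {-L<..<L}"
  then have "-x \<in> {-L<..<L}" "x \<in> {-L..L}" by auto
  have "((\<lambda>y. u (-y)) has_real_derivative w (-x) / a (-x) * (-1)) (at x)"
    by (rule DERIV_chain2[where g = uminus, OF ode_solD(2)[OF sol \<open>-x \<in> _\<close>]])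
       (auto intro!: derivative_eq_intros)
  then show "((\<lambda>x. - u (-x)) has_real_derivative w (-x) / a x) (at x)"
    using DERIV_minus a_even[OF \<open>x \<in> {-L..L}\<close>] by fastforce
  have "((\<lambda>y. w (-y)) has_real_derivative b (-x) * g (u (-x)) * (-1)) (at x)"
    by (rule DERIV_chain2[where g = uminus, OF ode_solD(3)[OF sol \<open>-x \<in> _\<close>]])
       (auto intro!: derivative_eq_intros)
  then show "((\<lambda>x. w (-x)) has_real_derivative b x * g (- u (-x))) (at x)"
    using b_even[OF \<open>x \<in> {-L..L}\<close>] g_odd[of "u (-x)"] by simp
qed

definition bvp_sol :: "(real \<Rightarrow> real) \<Rightarrow> (real \<Rightarrow> real) \<Rightarrow> bool" where
  "bvp_sol u w \<longleftrightarrow> ode_sol g u w \<and> u L = m \<and> u (-L) = - m"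

lemma bvp_solD:
  assumes "bvp_sol u w"
  shows "ode_sol g u w" "u L = m" "u (-L) = - m"
  using assms unfolding bvp_sol_def by auto

lemma bvp_sol_reflect: "bvp_sol u w \<Longrightarrow> bvp_sol (\<lambda>x. - u (-x)) (\<lambda>x. w (-x))"
  unfolding bvp_sol_def using ode_sol_reflect by auto

lemma bvp_sol_no_rest_point:
  assumes "bvp_sol u w" "x \<in> {-L<..<L}" "w x = 0" "g (u x) = 0"
  shows False
  using ode_sol_no_rest_point[OF g_lipschitz bvp_solD(1)[OF assms(1)] _ assms(2-4)]
    bvp_solD(2,3)[OF assms(1)] m_pos by simp

definition energy :: "(real \<Rightarrow> real) \<Rightarrow> (real \<Rightarrow> real) \<Rightarrow> real \<Rightarrow> real" where
  "energy u w x = (w x)\<^sup>2 / 2 - ab x * (G (u x) - G m)"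

lemma energy_deriv:
  assumes sol: "ode_sol g u w" and x: "x \<in> {0<..<L}"
  shows "(energy u w has_real_derivative - dab x * (G (u x) - G m)) (at x)"
proof -
  have x': "x \<in> {-L<..<L}" using x by auto
  have "a x \<noteq> 0" using a_nonzero x by auto
  have dw: "((\<lambda>y. (w y)\<^sup>2 / 2) has_real_derivative w x * (b x * g (u x))) (at x)"
    by (rule DERIV_cong[OF DERIV_cdivide[OF DERIV_power[OF ode_solD(3)[OF sol x'], of 2]]]) simp
  have dG: "((\<lambda>y. G (u y) - G m) has_real_derivative g (u x) * (w x / a x)) (at x)"
    using DERIV_chain2[OF G_deriv ode_solD(2)[OF sol x']] by (auto intro!: derivative_eq_intros)
  have "(energy u w has_real_derivative
      w x * (b x * g (u x)) - (dab x * (G (u x) - G m) + g (u x) * (w x / a x) * ab x)) (at x)"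
    unfolding energy_def[abs_def] ab_def
    by (intro DERIV_diff DERIV_mult dw dG ab_deriv[OF x])
  then show ?thesis
    using \<open>a x \<noteq> 0\<close> by (simp add: ab_def algebra_simps)
qed

lemma boundary_term_tendsto:
  assumes "bvp_sol u w"
  shows "((\<lambda>y. ab y * (G (u y) - G m)) \<longlongrightarrow> 0) (at_left L)"
proof -
  have "continuous_on {-L..L} (\<lambda>y. ab y * (G (u y) - G m))"
    using ode_solD(1)[OF bvp_solD(1)[OF assms]]
    by (intro continuous_intros ab_continuous continuous_on_compose2[OF G_continuous]) auto
  from continuous_on_Icc_at_leftD[OF this] show ?thesis
    using bvp_solD(2)[OF assms] L_pos by simp
qed

text \<open>On \<open>[0, L)\<close> the energy is nonincreasing and bounded below by the boundary term
  \<open>-ab (G(u) - G(m))\<close>, which tends to \<open>0\<close> at \<open>L\<close>.\<close>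

lemma energy_nonneg_right:
  assumes sol: "bvp_sol u w" and x: "0 \<le> x" "x < L"
  shows "energy u w x \<ge> 0"
proof (rule tendsto_upperbound)
  show "((\<lambda>y. - (ab y * (G (u y) - G m))) \<longlongrightarrow> 0) (at_left L)"
    using tendsto_minus[OF boundary_term_tendsto[OF sol]] by simp
  have "- (ab y * (G (u y) - G m)) \<le> energy u w x" if "y \<in> {x<..<L}" for y
  proof -
    have "energy u w y \<le> energy u w x"
    proof (rule DERIV_nonpos_imp_decreasing_open[where f = "energy u w"])
      fix t assume "x < t" "t < y"
      then have "t \<in> {0<..<L}" using that x by auto
      then show "\<exists>z. (energy u w has_real_derivative z) (at t) \<and> z \<le> 0"
        using energy_deriv[OF bvp_solD(1)[OF sol]] dab_nonneg G_min
        by (fastforce intro: mult_nonneg_nonneg)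
    next
      have "{x..y} \<subseteq> {-L<..<L}" "{x..y} \<subseteq> {-L..L}"
        using that x L_pos by auto
      moreover note ode_solD(1)[OF bvp_solD(1)[OF sol]] ode_sol_w_continuous[OF bvp_solD(1)[OF sol]]
      ultimately show "continuous_on {x..y} (energy u w)"
        unfolding energy_def[abs_def]
        by (intro continuous_intros continuous_on_subset[OF ab_continuous]
            continuous_on_compose2[OF G_continuous]; auto intro: continuous_on_subset)
    qed (use that in simp)
    moreover have "0 \<le> (w y)\<^sup>2 / 2"
      by simp
    ultimately show ?thesis
      unfolding energy_def by linarith
  qed
  then show "\<forall>\<^sub>F y in at_left L. - (ab y * (G (u y) - G m)) \<le> energy u w x"
    using eventually_at_left_real[OF \<open>x < L\<close>] by (rule eventually_mono[rotated]) auto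
qed simp

lemma energy_reflect:
  assumes "x \<in> {-L..L}"
  shows "energy (\<lambda>x. - u (-x)) (\<lambda>x. w (-x)) (-x) = energy u w x"
  unfolding energy_def using ab_even[OF assms] G_even[of "u x"] by simp

lemma energy_nonneg:
  assumes sol: "bvp_sol u w" and x: "x \<in> {-L<..<L}"
  shows "energy u w x \<ge> 0"
proof (cases "x \<ge> 0")
  case True
  then show ?thesis using energy_nonneg_right[OF sol] x by simp
next
  case False
  then have "energy (\<lambda>x. - u (-x)) (\<lambda>x. w (-x)) (-x) \<ge> 0"
    using energy_nonneg_right[OF bvp_sol_reflect[OF sol]] x by simp
  then show ?thesis
    using energy_reflect x by simp
qed

lemma bvp_flux_nonzero:
  assumes sol: "bvp_sol u w" and x: "x \<in> {-L<..<L}"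
  shows "w x \<noteq> 0"
proof
  assume "w x = 0"
  then have "ab x * (G (u x) - G m) \<le> 0"
    using energy_nonneg[OF sol x] unfolding energy_def by simp
  then have "G (u x) = G m"
    using ab_pos[of x] x G_min[of "u x"] by (simp add: mult_le_0_iff)
  then show False
    using bvp_sol_no_rest_point[OF sol x \<open>w x = 0\<close>] g_zero_if_G_min by blast
qed

lemma bvp_flux_pos:
  assumes sol: "bvp_sol u w" and x: "x \<in> {-L<..<L}"
  shows "w x > 0"
proof -
  have "\<And>t. -L < t \<Longrightarrow> t < L \<Longrightarrow> u differentiable at t"
    using ode_solD(2)[OF bvp_solD(1)[OF sol]] real_differentiable_def by fastforce
  then obtain l z where z: "-L < z" "z < L" "(u has_real_derivative l) (at z)"
    "u L - u (-L) = (L - -L) * l"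
    using MVT[OF _ ode_solD(1)[OF bvp_solD(1)[OF sol]]] L_pos by auto
  then have "l = w z / a z"
    using DERIV_unique ode_solD(2)[OF bvp_solD(1)[OF sol]] by fastforce
  moreover have "l > 0"
    using z(4) bvp_solD(2,3)[OF sol] m_pos L_pos by (simp add: zero_less_mult_iff)
  ultimately have "w z > 0"
    using a_pos[of z] z by (simp add: zero_less_divide_iff)
  then show ?thesis
    using continuous_nonvanishing_pos[OF ode_sol_w_continuous[OF bvp_solD(1)[OF sol]]
        bvp_flux_nonzero[OF sol] _ _ x] z
    by simp
qed

lemma bvp_sol_strict_mono:
  assumes sol: "bvp_sol u w"
  shows "strict_mono_on {-L..L} u"
proof (rule strict_mono_onI)
  fix x y assume "x \<in> {-L..L}" "y \<in> {-L..L}" "x < y"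
  show "u x < u y"
  proof (rule DERIV_pos_imp_increasing_open[OF \<open>x < y\<close>])
    fix t assume "x < t" "t < y"
    then have t: "t \<in> {-L<..<L}" using \<open>x \<in> _\<close> \<open>y \<in> _\<close> by auto
    then have "w t / a t > 0" using bvp_flux_pos[OF sol t] a_pos[of t] by simp
    then show "\<exists>z. (u has_real_derivative z) (at t) \<and> z > 0"
      using ode_solD(2)[OF bvp_solD(1)[OF sol] t] by blast
  next
    show "continuous_on {x..y} u"
      using \<open>x \<in> _\<close> \<open>y \<in> _\<close>
      by (intro continuous_on_subset[OF ode_solD(1)[OF bvp_solD(1)[OF sol]]]) auto
  qed
qed

text \<open>A solution is strictly increasing, so it can be parametrized by its values \<open>s \<in> [-m, m]\<close>;
  in this parametrization two solutions live on a common interval and can be compared.\<close>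

definition level :: "(real \<Rightarrow> real) \<Rightarrow> real \<Rightarrow> real" where
  "level u = inv_into {-L..L} u"

definition level_time :: "(real \<Rightarrow> real) \<Rightarrow> real \<Rightarrow> real" where
  "level_time u s = inv_a_primitive (level u s)"

definition level_kinetic :: "(real \<Rightarrow> real) \<Rightarrow> (real \<Rightarrow> real) \<Rightarrow> real \<Rightarrow> real" where
  "level_kinetic u w s = (w (level u s))\<^sup>2 / 2"

context
  fixes u w assumes sol: "bvp_sol u w"
begin

lemma bvp_sol_image: "u ` {-L..L} = {-m..m}"
proof
  have "u (-L) \<le> u x" "u x \<le> u L" if "x \<in> {-L..L}" for x
    using strict_mono_onD[OF bvp_sol_strict_mono[OF sol], of "-L" x]
      strict_mono_onD[OF bvp_sol_strict_mono[OF sol], of x L] that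
    by (cases "x = -L"; cases "x = L"; force)+
  then show "u ` {-L..L} \<subseteq> {-m..m}"
    using bvp_solD(2,3)[OF sol] by auto
  show "{-m..m} \<subseteq> u ` {-L..L}"
  proof
    fix s assume "s \<in> {-m..m}"
    then obtain x where "-L \<le> x" "x \<le> L" "u x = s"
      using IVT'[of u "-L" s L] bvp_solD(2,3)[OF sol] ode_solD(1)[OF bvp_solD(1)[OF sol]] L_pos
      by auto
    then show "s \<in> u ` {-L..L}" by force
  qed
qed

lemma level_spec:
  assumes "s \<in> {-m..m}"
  shows "level u s \<in> {-L..L}" "u (level u s) = s"
proof -
  have "s \<in> u ` {-L..L}"
    using assms bvp_sol_image by simp
  then show "level u s \<in> {-L..L}" "u (level u s) = s"
    unfolding level_def by (rule inv_into_into, rule f_inv_into_f)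
qed

lemma level_u: "x \<in> {-L..L} \<Longrightarrow> level u (u x) = x"
  unfolding level_def using strict_mono_on_imp_inj_on[OF bvp_sol_strict_mono[OF sol]]
  by (rule inv_into_f_f)

lemma level_boundary: "level u m = L" "level u (-m) = -L"
  using level_u[of L] level_u[of "-L"] bvp_solD(2,3)[OF sol] L_pos by auto

lemma level_continuous: "continuous_on {-m..m} (level u)"
  using continuous_on_inv[OF ode_solD(1)[OF bvp_solD(1)[OF sol]] compact_Icc, of "level u"]
    level_u bvp_sol_image by auto

lemma level_interior: "s \<in> {-m<..<m} \<Longrightarrow> level u s \<in> {-L<..<L}"
  using level_spec[of s] bvp_solD(2,3)[OF sol] by (fastforce simp: less_le)

lemma level_mono:
  assumes "s \<in> {-m..m}" "t \<in> {-m..m}" "s \<le> t"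
  shows "level u s \<le> level u t"
proof (rule ccontr)
  assume "\<not> level u s \<le> level u t"
  then have "u (level u t) < u (level u s)"
    using strict_mono_onD[OF bvp_sol_strict_mono[OF sol]] level_spec(1) assms(1,2) by simp
  then show False
    using level_spec(2) assms by simp
qed

lemma level_deriv:
  assumes s: "s \<in> {-m<..<m}"
  shows "(level u has_real_derivative a (level u s) / w (level u s)) (at s)"
proof -
  have x: "level u s \<in> {-L<..<L}" by (rule level_interior[OF s])
  then have "w (level u s) > 0" "a (level u s) > 0"
    using bvp_flux_pos[OF sol] a_pos by auto
  moreover have "isCont (level u) s"
    using continuous_on_interior[OF level_continuous, of s] s by simp
  ultimately have "(level u has_real_derivative inverse (w (level u s) / a (level u s))) (at s)"
    by (intro DERIV_inverse_function[where f = u and g = "level u" and a = "-m" and b = m,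
          OF ode_solD(2)[OF bvp_solD(1)[OF sol] x]])
       (use s level_spec(2) in auto)
  then show ?thesis by simp
qed

lemma level_time_deriv:
  assumes s: "s \<in> {-m<..<m}"
  shows "(level_time u has_real_derivative 1 / w (level u s)) (at s)"
proof -
  have "a (level u s) > 0"
    using level_interior[OF s] a_pos by auto
  moreover have
    "(level_time u has_real_derivative 1 / a (level u s) * (a (level u s) / w (level u s))) (at s)"
    unfolding level_time_def[abs_def]
    by (rule DERIV_chain2[OF inv_a_primitive_deriv[OF level_interior[OF s]] level_deriv[OF s]])
  ultimately show ?thesis by simp
qed

lemma level_time_continuous: "continuous_on {-m..m} (level_time u)"
  unfolding level_time_def[abs_def]
  by (rule continuous_on_compose2[OF inv_a_primitive_continuous level_continuous])
    (use level_spec(1) in auto)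

lemma level_kinetic_deriv:
  assumes s: "s \<in> {-m<..<m}"
  shows "(level_kinetic u w has_real_derivative ab (level u s) * g s) (at s)"
proof -
  have x: "level u s \<in> {-L<..<L}" by (rule level_interior[OF s])
  have "w (level u s) > 0" "a (level u s) > 0"
    using bvp_flux_pos[OF sol x] a_pos x by auto
  have "((\<lambda>t. w (level u t)) has_real_derivative
      b (level u s) * g (u (level u s)) * (a (level u s) / w (level u s))) (at s)"
    by (rule DERIV_chain2[OF ode_solD(3)[OF bvp_solD(1)[OF sol] x] level_deriv[OF s]])
  then show ?thesis
    unfolding level_kinetic_def[abs_def]
    by (rule DERIV_cong[OF DERIV_cdivide[OF DERIV_power[of _ _ _ _ 2]]])
       (use \<open>w (level u s) > 0\<close> \<open>a (level u s) > 0\<close> level_spec(2)[of s] s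
         in \<open>simp add: ab_def field_simps\<close>)
qed

end

lemma inverse_flux_le:
  assumes "bvp_sol h wh" "bvp_sol l wl" "s \<in> {-m<..<m}"
    and "level_kinetic l wl s \<le> level_kinetic h wh s"
  shows "1 / wh (level h s) \<le> 1 / wl (level l s)"
proof -
  have "wh (level h s) > 0" "wl (level l s) > 0"
    using bvp_flux_pos[OF assms(1) level_interior[OF assms(1,3)]]
      bvp_flux_pos[OF assms(2) level_interior[OF assms(2,3)]] .
  moreover have "(wl (level l s))\<^sup>2 \<le> (wh (level h s))\<^sup>2"
    using assms(4) unfolding level_kinetic_def by simp
  then have "wl (level l s) \<le> wh (level h s)"
    using power2_le_imp_le less_imp_le[OF \<open>wh (level h s) > 0\<close>] by blast
  ultimately show ?thesis
    by (simp add: frac_le)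
qed

lemma inverse_flux_less:
  assumes "bvp_sol h wh" "bvp_sol l wl" "s \<in> {-m<..<m}"
    and "level_kinetic l wl s < level_kinetic h wh s"
  shows "1 / wh (level h s) < 1 / wl (level l s)"
proof -
  have "wh (level h s) > 0" "wl (level l s) > 0"
    using bvp_flux_pos[OF assms(1) level_interior[OF assms(1,3)]]
      bvp_flux_pos[OF assms(2) level_interior[OF assms(2,3)]] .
  moreover have "(wl (level l s))\<^sup>2 < (wh (level h s))\<^sup>2"
    using assms(4) unfolding level_kinetic_def by simp
  then have "wl (level l s) < wh (level h s)"
    using power_less_imp_less_base less_imp_le[OF \<open>wh (level h s) > 0\<close>] by blast
  ultimately show ?thesis
    by (simp add: frac_less2)
qed

lemma ab_gap_mult_g_nonneg:
  assumes sol_h: "bvp_sol h wh" and sol_l: "bvp_sol l wl" and s: "0 \<le> s" "s < m"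
    and "0 \<le> level h s" "level_time h s < level_time l s"
  shows "(ab (level h s) - ab (level l s)) * g s \<ge> 0"
proof -
  have hs: "level h s \<in> {-L..L}" and ls: "level l s \<in> {-L..L}"
    using level_spec(1)[OF sol_h, of s] level_spec(1)[OF sol_l, of s] s m_pos by auto
  have "level h s \<le> level l s"
    using assms(6) inv_a_primitive_le_iff[OF hs ls] unfolding level_time_def by simp
  then have "ab (level h s) \<le> ab (level l s)"
    using ab_mono assms(5) ls by simp
  then show ?thesis
    using g_nonpos_Ico[OF s] by (intro mult_nonpos_nonpos) auto
qed

text \<open>\<open>D\<close> and \<open>P\<close> below form a cooperative pair on \<open>[s0, m)\<close>, forcing \<open>D m > 0\<close>;
  but at \<open>s = m\<close> both solutions are at \<open>x = L\<close>.\<close>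

lemma level_comparison:
  assumes sol_h: "bvp_sol h wh" and sol_l: "bvp_sol l wl"
    and s0: "0 \<le> s0" "s0 < m"
    and start: "0 \<le> level h s0" "level h s0 \<le> level l s0"
      "level_kinetic l wl s0 \<le> level_kinetic h wh s0"
    and strict: "level h s0 < level l s0 \<or> level_kinetic l wl s0 < level_kinetic h wh s0"
  shows False
proof -
  define D where "D s = level_time l s - level_time h s" for s
  define P where "P s = level_kinetic h wh s - level_kinetic l wl s" for s
  have s0_in: "s0 \<in> {-m..m}" using s0 by simp
  have in_range: "s \<in> {-m<..<m}" if "s \<in> {s0..<m}" for s
    using that s0 by auto
  have "D m > 0"
  proof (rule cooperative_pair_positive[OF s0(2)])
    fix s assume s: "s \<in> {s0..<m}"
    note s' = in_range[OF s]
    show "(D has_real_derivative 1 / wl (level l s) - 1 / wh (level h s)) (at s)"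
      unfolding D_def[abs_def]
      by (intro DERIV_diff level_time_deriv[OF sol_l s'] level_time_deriv[OF sol_h s'])
    show "(P has_real_derivative ab (level h s) * g s - ab (level l s) * g s) (at s)"
      unfolding P_def[abs_def]
      by (intro DERIV_diff level_kinetic_deriv[OF sol_h s'] level_kinetic_deriv[OF sol_l s'])
    show "P s \<ge> 0 \<Longrightarrow> 1 / wl (level l s) - 1 / wh (level h s) \<ge> 0"
      using inverse_flux_le[OF sol_h sol_l s'] unfolding P_def by simp
    show "P s > 0 \<Longrightarrow> 1 / wl (level l s) - 1 / wh (level h s) > 0"
      using inverse_flux_less[OF sol_h sol_l s'] unfolding P_def by simp
    assume "D s > 0"
    moreover have "level h s0 \<le> level h s"
      using level_mono[OF sol_h s0_in] s' s by simp
    ultimately show "ab (level h s) * g s - ab (level l s) * g s \<ge> 0"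
      using ab_gap_mult_g_nonneg[OF sol_h sol_l, of s] start(1) s s0
      unfolding D_def by (simp add: left_diff_distrib)
  next
    show "continuous_on {s0..m} D"
      unfolding D_def[abs_def] using s0
      by (intro continuous_intros continuous_on_subset[OF level_time_continuous[OF sol_l]]
          continuous_on_subset[OF level_time_continuous[OF sol_h]]) auto
    have h0: "level h s0 \<in> {-L..L}" and l0: "level l s0 \<in> {-L..L}"
      using level_spec(1)[OF sol_h s0_in] level_spec(1)[OF sol_l s0_in] .
    show "D s0 \<ge> 0"
      using inv_a_primitive_le_iff[OF h0 l0] start(2) unfolding D_def level_time_def by simp
    show "P s0 \<ge> 0"
      using start(3) unfolding P_def by simp
    show "D s0 > 0 \<or> P s0 > 0"
      using strict inv_a_primitive_less[OF h0 l0] unfolding D_def P_def level_time_def by auto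
  qed
  moreover have "D m = 0"
    unfolding D_def level_time_def using level_boundary sol_h sol_l by simp
  ultimately show False by simp
qed

lemma level_kinetic_neg_le:
  assumes sol: "bvp_sol u w" and s1: "0 \<le> s1" "s1 < m" and "level u s1 \<le> 0"
  shows "level_kinetic u w (-s1) \<le> level_kinetic u w s1"
proof -
  define R where "R s = level_kinetic u w s - level_kinetic u w (-s)" for s
  have R_deriv: "(R has_real_derivative (ab (level u r) - ab (level u (-r))) * g r) (at r)"
    if "0 \<le> r" "r \<le> s1" for r
  proof -
    have r: "r \<in> {-m<..<m}" "-r \<in> {-m<..<m}" using that s1 by auto
    have "((\<lambda>s. level_kinetic u w (-s)) has_real_derivative ab (level u (-r)) * g (-r) * (-1)) (at r)"
      by (rule DERIV_chain2[where g = uminus, OF level_kinetic_deriv[OF sol r(2)]])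
         (auto intro!: derivative_eq_intros)
    then show ?thesis
      unfolding R_def[abs_def] using DERIV_diff[OF level_kinetic_deriv[OF sol r(1)]] g_odd[of r]
      by (simp add: left_diff_distrib)
  qed
  have "R 0 \<le> R s1"
  proof (rule DERIV_nonneg_imp_increasing_open[OF s1(1)])
    fix r assume r: "0 < r" "r < s1"
    then have rr: "r \<in> {-m..m}" "-r \<in> {-m..m}" "s1 \<in> {-m..m}" using s1 by auto
    have "level u (-r) \<le> level u r" "level u r \<le> level u s1"
      using level_mono[OF sol rr(2,1)] level_mono[OF sol rr(1,3)] r by auto
    then have "ab (level u r) \<le> ab (level u (-r))"
      using ab_le_if_abs_le level_spec(1)[OF sol rr(1)] level_spec(1)[OF sol rr(2)] \<open>level u s1 \<le> 0\<close>
      by simp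
    then have "0 \<le> (ab (level u r) - ab (level u (-r))) * g r"
      using g_nonpos[of r] r s1 by (intro mult_nonpos_nonpos) auto
    then show "\<exists>z. (R has_real_derivative z) (at r) \<and> 0 \<le> z"
      using R_deriv[of r] r by auto
  next
    show "continuous_on {0..s1} R"
      using R_deriv by (intro continuous_at_imp_continuous_on ballI DERIV_isCont) auto
  qed
  then show ?thesis
    unfolding R_def by simp
qed

text \<open>If \<open>u(0) > 0\<close>, the reflection \<open>-u(-x)\<close> reaches the level \<open>u(0)\<close> later than \<open>u\<close>
  and, by \<open>level_kinetic_neg_le\<close>, with no larger flux; \<open>level_comparison\<close> excludes this.\<close>

lemma bvp_sol_at_zero_nonpos:
  assumes sol: "bvp_sol u w"
  shows "u 0 \<le> 0"
proof (rule ccontr)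
  assume "\<not> u 0 \<le> 0"
  define ur wr where "ur x = - u (-x)" and "wr x = w (-x)" for x
  have sol_r: "bvp_sol ur wr"
    unfolding ur_def[abs_def] wr_def[abs_def] by (rule bvp_sol_reflect[OF sol])
  have "(0::real) \<in> {-L..L}" "L \<in> {-L..L}" using L_pos by auto
  then have "u 0 < m"
    using strict_mono_onD[OF bvp_sol_strict_mono[OF sol]] bvp_solD(2)[OF sol] L_pos by fastforce
  then have u0: "u 0 \<in> {-m..m}" "- u 0 \<in> {-m..m}" "0 < u 0" "u 0 < m"
    using \<open>\<not> u 0 \<le> 0\<close> by auto
  define t where "t = level u (- u 0)"
  have t: "t \<in> {-L..L}" "u t = - u 0"
    unfolding t_def using level_spec[OF sol u0(2)] by auto
  have "t < 0"
    using strict_mono_onD[OF bvp_sol_strict_mono[OF sol] \<open>0 \<in> {-L..L}\<close> t(1)] t(2) u0(3)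
    by (cases t "0::real" rule: linorder_cases) auto
  have level_u0: "level u (u 0) = 0"
    using level_u[OF sol \<open>0 \<in> {-L..L}\<close>] .
  have level_r: "level ur (u 0) = - t"
    using level_u[OF sol_r, of "-t"] t unfolding ur_def by simp
  have "level_kinetic ur wr (u 0) = level_kinetic u w (- u 0)"
    unfolding level_kinetic_def level_r wr_def t_def by simp
  also have "\<dots> \<le> level_kinetic u w (u 0)"
    by (rule level_kinetic_neg_le[OF sol]) (use u0 level_u0 in auto)
  finally show False
    using level_comparison[OF sol sol_r, of "u 0"] u0 level_u0 level_r \<open>t < 0\<close> by simp
qed

lemma bvp_sol_at_zero:
  assumes "bvp_sol u w"
  shows "u 0 = 0"
  using bvp_sol_at_zero_nonpos[OF assms] bvp_sol_at_zero_nonpos[OF bvp_sol_reflect[OF assms]]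
  by simp

lemma bvp_sol_unique:
  assumes sol_u: "bvp_sol u wu" and sol_v: "bvp_sol v wv" and x: "x \<in> {-L..L}"
  shows "u x = v x"
proof -
  have zero: "(0::real) \<in> {-L..L}" "(0::real) \<in> {-L<..<L}" using L_pos by auto
  have "level u 0 = 0" "level v 0 = 0"
    using level_u[OF sol_u zero(1)] level_u[OF sol_v zero(1)]
      bvp_sol_at_zero[OF sol_u] bvp_sol_at_zero[OF sol_v] by simp_all
  then have "\<not> (wu 0)\<^sup>2 < (wv 0)\<^sup>2" "\<not> (wv 0)\<^sup>2 < (wu 0)\<^sup>2"
    using level_comparison[OF sol_u sol_v, of 0] level_comparison[OF sol_v sol_u, of 0] m_pos
    unfolding level_kinetic_def by auto
  then have flux_eq: "wu 0 = wv 0"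
    using bvp_flux_pos[OF sol_u zero(2)] bvp_flux_pos[OF sol_v zero(2)]
    by (metis power2_le_imp_le linorder_not_le order_antisym less_imp_le)
  show ?thesis
  proof (cases "x \<in> {-L<..<L}")
    case True
    then show ?thesis
      using ode_sol_unique[OF g_lipschitz bvp_solD(1)[OF sol_u] bvp_solD(1)[OF sol_v] zero(2) _
          flux_eq True]
        bvp_sol_at_zero[OF sol_u] bvp_sol_at_zero[OF sol_v] by simp
  next
    case False
    then have "x = L \<or> x = -L" using x by auto
    then show ?thesis
      using bvp_solD(2,3)[OF sol_u] bvp_solD(2,3)[OF sol_v] by auto
  qed
qed

lemma bvp_sol_odd:
  assumes "bvp_sol u w" "x \<in> {-L..L}"
  shows "u (-x) = - u x"
  using bvp_sol_unique[OF assms(1) bvp_sol_reflect[OF assms(1)], of "-x"] assms(2) by simp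

definition g_trunc :: "real \<Rightarrow> real" where
  "g_trunc r = g (max (-m) (min m r))"

lemma g_trunc_eq: "r \<in> {-m..m} \<Longrightarrow> g_trunc r = g r"
  unfolding g_trunc_def by simp

lemma g_trunc_outside:
  assumes "m \<le> \<bar>r\<bar>"
  shows "g_trunc r = 0"
proof -
  have "max (-m) (min m r) = m \<or> max (-m) (min m r) = -m"
    using assms m_pos by (auto simp: abs_if max_def min_def split: if_splits)
  then show ?thesis
    unfolding g_trunc_def using g_m by auto
qed

lemma g_trunc_lipschitz: obtains C where "C-lipschitz_on UNIV g_trunc"
proof -
  obtain C where C: "C-lipschitz_on {-m..m} g"
    using g_lipschitz by blast
  have "C-lipschitz_on UNIV g_trunc"
  proof (rule lipschitz_onI)
    fix r1 r2 :: real
    have "dist (g_trunc r1) (g_trunc r2) \<le> C * dist (max (-m) (min m r1)) (max (-m) (min m r2))"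
      unfolding g_trunc_def using m_pos by (intro lipschitz_onD[OF C]) auto
    also have "\<dots> \<le> C * dist r1 r2"
      using lipschitz_on_nonneg[OF C]
      by (intro mult_left_mono) (auto simp: dist_real_def max_def min_def)
    finally show "dist (g_trunc r1) (g_trunc r2) \<le> C * dist r1 r2" .
  qed (rule lipschitz_on_nonneg[OF C])
  then show ?thesis ..
qed

lemma g_trunc_bounded: obtains M where "\<And>r. \<bar>g_trunc r\<bar> \<le> M"
proof -
  obtain C where "C-lipschitz_on {-m..m} g"
    using g_lipschitz by blast
  then have "bounded (g ` {-m..m})"
    by (intro compact_imp_bounded compact_continuous_image lipschitz_on_continuous_on) auto
  then obtain M where "\<forall>r\<in>{-m..m}. \<bar>g r\<bar> \<le> M"
    unfolding bounded_iff by auto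
  moreover have "max (-m) (min m r) \<in> {-m..m}" for r
    using m_pos by auto
  ultimately show ?thesis
    using that[of M] unfolding g_trunc_def by blast
qed

lemma trunc_sol_range:
  assumes sol: "ode_sol g_trunc u w" and boundary: "u (-L) = -m" "u L = m"
    and x: "x \<in> {-L..L}"
  shows "u x \<in> {-m..m}"
proof (rule ccontr)
  assume "u x \<notin> {-m..m}"
  have F: "\<exists>C. C-lipschitz_on {-R..R} g_trunc" for R
    using g_trunc_lipschitz lipschitz_on_subset by (metis top_greatest)
  obtain x0 where x0: "x0 \<in> {-L..L}" "m < \<bar>u x0\<bar>"
    and extremal: "(\<forall>y\<in>{-L..L}. u y \<le> u x0) \<or> (\<forall>y\<in>{-L..L}. u x0 \<le> u y)"
  proof (cases "u x > m")
    case True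
    obtain x0 where "x0 \<in> {-L..L}" "\<forall>y\<in>{-L..L}. u y \<le> u x0"
      using continuous_attains_sup[OF compact_Icc _ ode_solD(1)[OF sol]] L_pos by auto
    then show ?thesis
      using that[of x0] True x by fastforce
  next
    case False
    then have "u x < -m" using \<open>u x \<notin> {-m..m}\<close> by auto
    obtain x0 where "x0 \<in> {-L..L}" "\<forall>y\<in>{-L..L}. u x0 \<le> u y"
      using continuous_attains_inf[OF compact_Icc _ ode_solD(1)[OF sol]] L_pos by auto
    then show ?thesis
      using that[of x0] \<open>u x < -m\<close> x by fastforce
  qed
  then have "x0 \<in> {-L<..<L}"
    using boundary m_pos by (auto simp: less_le)
  then show False
    using ode_sol_no_rest_point[OF F sol _ _ ode_sol_flux_zero_at_extremum[OF sol _ extremal]]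
      g_trunc_outside[of "u x0"] x0 boundary m_pos by simp
qed

lemma bvp_sol_exists: "\<exists>u w. bvp_sol u w"
proof -
  obtain C M where "C-lipschitz_on UNIV g_trunc" "\<And>r. \<bar>g_trunc r\<bar> \<le> M"
    using g_trunc_lipschitz g_trunc_bounded by metis
  then obtain u w where sol: "ode_sol g_trunc u w" and "u (-L) = -m" "u L = m"
    by (rule exists_ode_sol_boundary_values)
  then have "u x \<in> {-m..m}" if "x \<in> {-L..L}" for x
    using trunc_sol_range that by blast
  then have "ode_sol g u w"
    using sol g_trunc_eq unfolding ode_sol_def
    by (simp add: greaterThanLessThan_subseteq_atLeastAtMost_iff)
  then show ?thesis
    using \<open>u (-L) = -m\<close> \<open>u L = m\<close> unfolding bvp_sol_def by blast
qed

lemma is_solution_iff: "is_solution L a b (\<lambda>s. - g s) m u \<longleftrightarrow> (\<exists>w. bvp_sol u w)"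
proof
  assume "is_solution L a b (\<lambda>s. - g s) m u"
  then obtain du where du: "\<forall>x\<in>{-L<..<L}. (u has_real_derivative du x) (at x) \<and>
        ((\<lambda>y. a y * du y) has_real_derivative - (b x * - g (u x))) (at x)"
    and "continuous_on {-L..L} u" "u L = m" "u (-L) = - m"
    unfolding is_solution_def by blast
  then have "bvp_sol u (\<lambda>y. a y * du y)"
    unfolding bvp_sol_def ode_sol_def
  proof (intro conjI ballI)
    fix x assume x: "x \<in> {-L<..<L}"
    have "a x * du x / a x = du x"
      using a_nonzero x by auto
    then show "(u has_real_derivative a x * du x / a x) (at x)"
      using du x by simp
    show "((\<lambda>y. a y * du y) has_real_derivative b x * g (u x)) (at x)"
      using du x by simp
  qed
  then show "\<exists>w. bvp_sol u w" by blast
next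
  assume "\<exists>w. bvp_sol u w"
  then obtain w where sol: "bvp_sol u w" ..
  have "((\<lambda>y. a y * (w y / a y)) has_real_derivative - (b x * - g (u x))) (at x)"
    if x: "x \<in> {-L<..<L}" for x
  proof -
    have "(w has_real_derivative - (b x * - g (u x))) (at x)"
      using ode_solD(3)[OF bvp_solD(1)[OF sol] x] by simp
    then show ?thesis
      by (rule has_field_derivative_transform_within_open[where S = "{-L<..<L}"])
         (use x a_nonzero in auto)
  qed
  then show "is_solution L a b (\<lambda>s. - g s) m u"
    unfolding is_solution_def using ode_solD(1,2)[OF bvp_solD(1)[OF sol]] bvp_solD(2,3)[OF sol]
    by (intro conjI exI[of _ "\<lambda>y. w y / a y"]) auto
qed

end

theorem proposition4p1:
  fixes L m :: real and a b da db G g :: "real \<Rightarrow> real"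
  assumes L_pos: "L > 0" and m_pos: "m > 0"
    and a_C1: "C1_on_with_deriv {-L..L} a da"
    and b_C1: "C1_on_with_deriv {-L..L} b db"
    and a_pos: "\<forall>x\<in>{-L..L}. a x > 0"
    and b_pos: "\<forall>x\<in>{-L..L}. b x > 0"
    and a_even: "\<forall>x\<in>{-L..L}. a (-x) = a x"
    and b_even: "\<forall>x\<in>{-L..L}. b (-x) = b x"
    and G_deriv: "\<forall>x. (G has_real_derivative g x) (at x)"
    and g_loc_lip: "\<forall>x. \<exists>e>0. \<exists>C. C-lipschitz_on (ball x e) g"
    and G_nonneg: "\<forall>x. G x \<ge> 0"
    and G_even: "\<forall>x. G (-x) = G x"
    and ab_mono: "\<forall>x\<in>{0<..<L}. da x * b x + a x * db x \<ge> 0"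
    and G_ge: "\<forall>x>0. G x \<ge> G m"
    and g_nonpos: "\<forall>x\<in>{0<..<m}. g x \<le> 0"
  shows "(\<exists>u. is_solution L a b (\<lambda>s. - g s) m u) \<and>
         (\<forall>u v. is_solution L a b (\<lambda>s. - g s) m u \<and> is_solution L a b (\<lambda>s. - g s) m v
                 \<longrightarrow> (\<forall>x\<in>{-L..L}. u x = v x)) \<and>
         (\<forall>u. is_solution L a b (\<lambda>s. - g s) m u \<longrightarrow>
                (\<forall>x\<in>{-L..L}. u (-x) = - u x) \<and> strict_mono_on {-L..L} u)"
proof -
  have "symmetric_bvp L a b m (\<lambda>x. da x * b x + a x * db x) G g"
  proof (intro symmetric_bvp.intro sturm_liouville.intro symmetric_bvp_axioms.intro)
    show "continuous_on {-L..L} a"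
      using a_C1 by (rule C1_on_with_deriv_continuous)
    show "continuous_on {-L..L} b"
      using b_C1 by (rule C1_on_with_deriv_continuous)
    show "\<exists>C. C-lipschitz_on {-R..R} g" for R
      using g_loc_lip by (intro lipschitz_on_Icc_if_locally_lipschitz) blast
    fix x :: real
    show "x \<in> {0<..<L} \<Longrightarrow> ((\<lambda>x. a x * b x) has_real_derivative da x * b x + a x * db x) (at x)"
      using C1_on_with_deriv_interior[OF a_C1, of x] C1_on_with_deriv_interior[OF b_C1, of x]
      by (auto intro!: derivative_eq_intros)
    show "x \<in> {-L..L} \<Longrightarrow> a x > 0" "x \<in> {-L..L} \<Longrightarrow> b x > 0"
      "x \<in> {-L..L} \<Longrightarrow> a (-x) = a x" "x \<in> {-L..L} \<Longrightarrow> b (-x) = b x"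
      "x \<in> {0<..<L} \<Longrightarrow> da x * b x + a x * db x \<ge> 0"
      "x > 0 \<Longrightarrow> G m \<le> G x" "x \<in> {0<..<m} \<Longrightarrow> g x \<le> 0"
      using a_pos b_pos a_even b_even ab_mono G_ge g_nonpos by blast+
    show "(G has_real_derivative g x) (at x)" "G (-x) = G x"
      using G_deriv G_even by blast+
  qed (use L_pos m_pos in simp_all)
  then interpret symmetric_bvp L a b m "\<lambda>x. da x * b x + a x * db x" G g .
  show ?thesis
    unfolding is_solution_iff using bvp_sol_exists bvp_sol_unique bvp_sol_odd bvp_sol_strict_mono
    by blast
qed

end
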